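(* Let $J, G \in \Gamma_0(\mathbb{R}^n)$ with $\mathrm{ri}(\mathrm{dom}\,J)\cap \mathrm{ri}(\mathrm{dom}\,G)\neq\emptyset$ and such that the set of minimizers of $\min_{x\in\mathbb{R}^n} J(x)+G(x)$ is nonempty. Let $\gamma>0$ and $\lambda_k \in\, ]0,2]$ with $\sum_{k}\lambda_k(2-\lambda_k)=+\infty$, and let $(z^k,x^k,v^k)$ be generated by the Douglas--Rachford scheme \[ v^{k+1} = \mathrm{prox}_{\gamma G}(2x^k - z^k),\quad z^{k+1} = (1-\lambda_k) z^k + \lambda_k (z^k + v^{k+1} - x^k),\quad x^{k+1} = \mathrm{prox}_{\gamma J}(z^{k+1}). \] Then $(z^k,x^k,v^k)$ converges to $(z^\star,x^\star,x^\star)$, where $z^\star$ is a fixed point of $\tfrac12(\mathrm{rprox}_{\gamma G}\circ\mathrm{rprox}_{\gamma J}+\mathrm{Id})$ and $x^\star$ is a global minimizer of $J+G$; write $v^\star \eqdef x^\star$. Assume that $J$ is partly smooth at $x^\star$ relative to a manifold $\mathcal{M}_J$, that $G$ is partly smooth at $v^\star$ relative to a manifold $\mathcal{M}_G$, and that \[ z^\star \in x^\star + \gamma\big(\mathrm{ri}(\partial J(x^\star)) \cap \mathrm{ri}(-\partial G(v^\star))\big). \] Then: (1) for all $k$ sufficiently large, $(x^k,v^k)\in\mathcal{M}_J\times\mathcal{M}_G$; (2) if $G$ is partly smooth at $v^\star$ relative to the affine/linear manifold $v^\star+T^G_{v^\star}$, then for all $k$ sufficiently large $v^k \in v^\star +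 T^G_{v^\star}$ and $T^G_{v^k}=T^G_{v^\star}$; (3) if $J$ is partly smooth at $x^\star$ relative to the affine/linear manifold $x^\star+T^J_{x^\star}$, then for all $k$ sufficiently large $x^k\in x^\star+T^J_{x^\star}$ and $T^J_{x^k}=T^J_{x^\star}$.
   Context: $\Gamma_0(\mathbb{R}^n)$: proper lsc convex functions; $\mathrm{ri}$: relative interior; $\mathrm{prox}_{\gamma F}(z)=\operatorname{argmin}_x \gamma F(x)+\tfrac12\|x-z\|^2$, $\mathrm{rprox}_{\gamma F}=2\mathrm{prox}_{\gamma F}-\mathrm{Id}$. For $F\in\Gamma_0$ and $x$ with $\partial F(x)\ne\emptyset$, $T^F_x \eqdef \mathrm{Lin}(\partial F(x))^\perp$ where $\mathrm{Lin}(C)$ is the subspace parallel to the affine hull of $C$. $F$ is partly smooth at $x$ relative to a set $\mathcal{M}\ni x$ if: (1) $\mathcal{M}$ is a $C^2$-manifold around $x$ and $F|_{\mathcal{M}}$ is $C^2$ near $x$; (2) the tangent space of $\mathcal{M}$ at $x$ equals $T^F_x$; (3) $\partial F$ is continuous at $x$ relative to $\mathcal{M}$. If $\mathcal{M}$ is affine or linear then $\mathcal{M}=x+T^F_x$. *)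

theory Defs
  imports "HOL-Analysis.Analysis"
begin

definition proper_fun :: "('a \<Rightarrow> ereal) \<Rightarrow> bool" where
  "proper_fun F \<longleftrightarrow> (\<forall>x. F x \<noteq> -\<infinity>) \<and> (\<exists>x. F x < \<infinity>)"

definition convex_fun :: "('a::real_vector \<Rightarrow> ereal) \<Rightarrow> bool" where
  "convex_fun F \<longleftrightarrow> convex {(x, t::real). F x \<le> ereal t}"

definition lsc_fun :: "('a::topological_space \<Rightarrow> ereal) \<Rightarrow> bool" where
  "lsc_fun F \<longleftrightarrow> (\<forall>c::real. closed {x. F x \<le> ereal c})"

definition Gamma0 :: "('a::euclidean_space \<Rightarrow> ereal) \<Rightarrow> bool" where
  "Gamma0 F \<longleftrightarrow> proper_fun F \<and> convex_fun F \<and> lsc_fun F"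

definition edom :: "('a \<Rightarrow> ereal) \<Rightarrow> 'a set" where
  "edom F = {x. F x < \<infinity>}"

definition subdiff :: "('a::euclidean_space \<Rightarrow> ereal) \<Rightarrow> 'a \<Rightarrow> 'a set" where
  "subdiff F x = {g. F x < \<infinity> \<and> (\<forall>y. F x + ereal (g \<bullet> (y - x)) \<le> F y)}"

definition prox :: "real \<Rightarrow> ('a::euclidean_space \<Rightarrow> ereal) \<Rightarrow> 'a \<Rightarrow> 'a" where
  "prox \<gamma> F z = (SOME p. \<forall>y. ereal \<gamma> * F p + ereal ((norm (p - z))\<^sup>2 / 2)
                               \<le> ereal \<gamma> * F y + ereal ((norm (y - z))\<^sup>2 / 2))"

definition rprox :: "real \<Rightarrow> ('a::euclidean_space \<Rightarrow> ereal) \<Rightarrow> 'a \<Rightarrow> 'a" where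
  "rprox \<gamma> F z = 2 *\<^sub>R prox \<gamma> F z - z"

text \<open>Lin(C): the subspace parallel to the affine hull of C; T^F_x = Lin(dF(x))^perp.\<close>
definition Lin :: "'a::real_vector set \<Rightarrow> 'a set" where
  "Lin C = span {a - b | a b. a \<in> C \<and> b \<in> C}"

definition Tsp :: "('a::euclidean_space \<Rightarrow> ereal) \<Rightarrow> 'a \<Rightarrow> 'a set" where
  "Tsp F x = orthogonal_comp (Lin (subdiff F x))"

definition C2_on :: "'a::euclidean_space set \<Rightarrow> ('a \<Rightarrow> 'b::euclidean_space) \<Rightarrow> bool" where
  "C2_on U f \<longleftrightarrow> (\<exists>(D :: 'a \<Rightarrow> ('a \<Rightarrow>\<^sub>L 'b)) (D2 :: 'a \<Rightarrow> ('a \<Rightarrow>\<^sub>L ('a \<Rightarrow>\<^sub>L 'b))).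
      (\<forall>y\<in>U. (f has_derivative blinfun_apply (D y)) (at y)) \<and>
      (\<forall>y\<in>U. (D has_derivative blinfun_apply (D2 y)) (at y)) \<and>
      continuous_on U D2)"

text \<open>M is a C^2 manifold around x with tangent space T at x: locally M is the zero set
  of a C^2 submersion Phi (valued in a subspace S, derivative at x onto S); the tangent
  space is the kernel of the derivative at x.\<close>
definition C2_manifold_tangent :: "'a::euclidean_space set \<Rightarrow> 'a \<Rightarrow> 'a set \<Rightarrow> bool" where
  "C2_manifold_tangent M x T \<longleftrightarrow> x \<in> M \<and>
     (\<exists>U S (\<Phi> :: 'a \<Rightarrow> 'a) D. open U \<and> x \<in> U \<and> subspace S \<and> \<Phi> ` U \<subseteq> S \<and> C2_on U \<Phi> \<and>
        (\<Phi> has_derivative D) (at x) \<and> range D = S \<and>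
        M \<inter> U = {y \<in> U. \<Phi> y = 0} \<and> {h. D h = 0} = T)"

text \<open>Continuity (Painleve-Kuratowski) of the subdifferential at x relative to M.\<close>
definition subdiff_continuous_rel :: "('a::euclidean_space \<Rightarrow> ereal) \<Rightarrow> 'a \<Rightarrow> 'a set \<Rightarrow> bool" where
  "subdiff_continuous_rel F x M \<longleftrightarrow>
     (\<forall>y. (\<forall>k. y k \<in> M) \<and> y \<longlonglongrightarrow> x \<longrightarrow>
        (\<forall>g0 \<in> subdiff F x. \<exists>g. (\<forall>\<^sub>F k in sequentially. g k \<in> subdiff F (y k)) \<and> g \<longlonglongrightarrow> g0) \<and>
        (\<forall>r g g0. strict_mono r \<and> (\<forall>k. g k \<in> subdiff F (y (r k))) \<and> g \<longlonglongrightarrow> g0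
                    \<longrightarrow> g0 \<in> subdiff F x))"

definition partly_smooth :: "('a::euclidean_space \<Rightarrow> ereal) \<Rightarrow> 'a \<Rightarrow> 'a set \<Rightarrow> bool" where
  "partly_smooth F x M \<longleftrightarrow>
     C2_manifold_tangent M x (Tsp F x) \<and>
     (\<exists>U (f :: 'a \<Rightarrow> real). open U \<and> x \<in> U \<and> C2_on U f \<and> (\<forall>y \<in> M \<inter> U. F y = ereal (f y))) \<and>
     subdiff_continuous_rel F x M"

end

theory Submission
  imports Defs
begin

text \<open>
  With R = rprox \<gamma> G \<circ> rprox \<gamma> J the iteration reads z (k+1) = z k + (lam k / 2) (R (z k) - z k),
  a Krasnosel'skii-Mann iteration of a nonexpansive map. Under the relative-interior
  qualification a minimizer m of J + G carries a subgradient u of J with -u a subgradient of G,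
  and m + \<gamma> u is a fixed point of R. Hence z k converges, and x k, v k follow because proximity
  operators are nonexpansive.

  For the identification, (z k - x k) / \<gamma> is a subgradient of J at x k converging to a point of
  ri \<partial>J(x*). If x k left M_J infinitely often, such x k could be moved back onto M_J by short
  steps in Lin \<partial>J(x*) (Brouwer's theorem applied to the submersion defining M_J); continuity of
  \<partial>J along M_J then yields subgradients at the corrected points which, by monotonicity of \<partial>J,
  contradict the relative-interior position. If M_J is affine, J is smooth along it, so any two
  subgradients at a nearby point of M_J agree on T_x* and T_x* \<subseteq> T_(x k); continuity of \<partial>J gives
  the reverse inclusion. The same applies to G and v k.
\<close>

lemma Gamma0_neq_MInf: "Gamma0 F \<Longrightarrow> F x \<noteq> -\<infinity>"
  by (auto simp: Gamma0_def proper_fun_def)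

lemma Gamma0_finiteE:
  assumes "Gamma0 F" "F x < \<infinity>"
  obtains r where "F x = ereal r"
  using Gamma0_neq_MInf[OF assms(1), of x] assms(2) by (cases "F x") auto

lemma Gamma0_dom_nonempty:
  assumes "Gamma0 F" shows "\<exists>a r. F a = ereal r"
proof -
  obtain a where "F a < \<infinity>" using assms by (auto simp: Gamma0_def proper_fun_def)
  then show ?thesis using Gamma0_finiteE[OF assms] by metis
qed

lemma Gamma0_sublevel_closed: "Gamma0 F \<Longrightarrow> closed {x. F x \<le> ereal c}"
  by (auto simp: Gamma0_def lsc_fun_def)

lemma Gamma0_convex_ineq:
  assumes "Gamma0 F" "F x = ereal a" "F y = ereal b" "0 \<le> t" "t \<le> 1"
  shows "F ((1 - t) *\<^sub>R x + t *\<^sub>R y) \<le> ereal ((1 - t) * a + t * b)"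
proof -
  have "convex {(x, t::real). F x \<le> ereal t}"
    using assms(1) by (auto simp: Gamma0_def convex_fun_def)
  from convexD[OF this, of "(x, a)" "(y, b)" "1 - t" t] assms(2-5)
  show ?thesis by (simp add: algebra_simps)
qed

lemma Gamma0_edom_convex:
  assumes F: "Gamma0 F" shows "convex (edom F)"
proof (rule convexI)
  fix x y :: 'a and u v :: real
  assume h: "x \<in> edom F" "y \<in> edom F" "0 \<le> u" "0 \<le> v" "u + v = 1"
  obtain a b where ab: "F x = ereal a" "F y = ereal b"
    using h(1,2) unfolding edom_def by (metis Gamma0_finiteE[OF F] mem_Collect_eq)
  have "F ((1 - v) *\<^sub>R x + v *\<^sub>R y) < \<infinity>"
    using Gamma0_convex_ineq[OF F ab, of v] h by (auto intro: le_less_trans)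
  moreover have "u = 1 - v" using h(5) by simp
  ultimately show "u *\<^sub>R x + v *\<^sub>R y \<in> edom F" by (simp add: edom_def)
qed

lemma subdiff_finite: "g \<in> subdiff F x \<Longrightarrow> F x < \<infinity>"
  by (simp add: subdiff_def)

lemma subdiff_ineq:
  assumes "g \<in> subdiff F x" "F x = ereal a" "F y = ereal b"
  shows "a + g \<bullet> (y - x) \<le> b"
proof -
  have "F x + ereal (g \<bullet> (y - x)) \<le> F y" using assms(1) by (simp add: subdiff_def)
  then show ?thesis using assms(2,3) by simp
qed

lemma subdiffI:
  assumes "Gamma0 F" "F x = ereal a" "\<And>y b. F y = ereal b \<Longrightarrow> a + g \<bullet> (y - x) \<le> b"
  shows "g \<in> subdiff F x"
proof -
  have "F x + ereal (g \<bullet> (y - x)) \<le> F y" for y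
    using assms(2) assms(3)[of y] Gamma0_neq_MInf[OF assms(1), of y] by (cases "F y") auto
  then show ?thesis using assms(2) by (simp add: subdiff_def)
qed

lemma subdiff_monotone:
  assumes F: "Gamma0 F" and g: "g \<in> subdiff F x" and h: "h \<in> subdiff F y"
  shows "(g - h) \<bullet> (x - y) \<ge> 0"
proof -
  obtain a b where ab: "F x = ereal a" "F y = ereal b"
    by (meson F Gamma0_finiteE g h subdiff_finite)
  have "a + g \<bullet> (y - x) \<le> b" "b + h \<bullet> (x - y) \<le> a"
    using subdiff_ineq[OF g ab] subdiff_ineq[OF h ab(2,1)] by auto
  then show ?thesis unfolding inner_diff_left inner_diff_right by linarith
qed

lemma opposite_subgradients_imp_minimizer:
  assumes J: "Gamma0 J" and G: "Gamma0 G"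
    and u: "u \<in> subdiff J x" "- u \<in> subdiff G x"
  shows "J x + G x \<le> J y + G y"
proof -
  obtain a b where ab: "J x = ereal a" "G x = ereal b"
    by (meson Gamma0_finiteE assms subdiff_finite)
  show ?thesis
  proof (cases "J y < \<infinity> \<and> G y < \<infinity>")
    case True
    then obtain c d where cd: "J y = ereal c" "G y = ereal d"
      by (meson Gamma0_finiteE J G)
    have "a + u \<bullet> (y - x) \<le> c" "b + (- u) \<bullet> (y - x) \<le> d"
      using subdiff_ineq[OF u(1) ab(1) cd(1)] subdiff_ineq[OF u(2) ab(2) cd(2)] by auto
    then show ?thesis using ab cd by simp
  next
    case False
    then have "J y + G y = \<infinity>"
      using Gamma0_neq_MInf[OF J, of y] Gamma0_neq_MInf[OF G, of y]
      by (cases "J y"; cases "G y") auto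
    then show ?thesis by (metis ereal_less_eq(1))
  qed
qed

lemma lsc_attains_min_on_compact:
  fixes h :: "'a::heine_borel \<Rightarrow> ereal"
  assumes cl: "\<And>c. closed {x. h x \<le> ereal c}" and K: "compact K" "K \<noteq> {}"
    and nm: "\<And>x. h x \<noteq> -\<infinity>"
  shows "\<exists>x\<in>K. \<forall>y\<in>K. h x \<le> h y"
proof (cases "\<forall>y\<in>K. h y = \<infinity>")
  case True then show ?thesis using K by auto
next
  case False
  define \<mu> where "\<mu> = (INF y\<in>K. h y)"
  have mule: "\<And>y. y \<in> K \<Longrightarrow> \<mu> \<le> h y" unfolding \<mu>_def by (simp add: INF_lower)
  obtain y0 where y0: "y0 \<in> K" "h y0 \<noteq> \<infinity>" using False by blast
  have "\<mu> < \<infinity>" using mule[OF y0(1)] y0(2) by (cases \<mu>; cases "h y0"; auto)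
  define t where "t n = (if \<mu> = -\<infinity> then - real n else real_of_ereal \<mu> + 1 / (real n + 1))" for n :: nat
  have tmono: "t n \<le> t m" if "m \<le> n" for m n
  proof (cases "\<mu> = -\<infinity>")
    case True then show ?thesis using that by (simp add: t_def)
  next
    case False
    have "1 / (real n + 1) \<le> 1 / (real m + 1)" using that by (intro divide_left_mono) auto
    then show ?thesis using False by (simp add: t_def)
  qed
  have tgt: "\<mu> < ereal (t n)" for n
    using \<open>\<mu> < \<infinity>\<close> by (cases \<mu>) (auto simp: t_def)
  define S where "S n = K \<inter> {x. h x \<le> ereal (t n)}" for n
  have "\<Inter>(range S) \<noteq> {}"
  proof (rule compact_nest)
    show "compact (S n)" for n unfolding S_def using K cl by (simp add: compact_Int_closed)
    show "S n \<noteq> {}" for n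
    proof -
      have "\<exists>y\<in>K. h y < ereal (t n)" using tgt[of n] unfolding \<mu>_def by (simp add: INF_less_iff)
      then show ?thesis unfolding S_def by (auto intro: less_imp_le)
    qed
    show "S n \<subseteq> S m" if "m \<le> n" for m n unfolding S_def using tmono[OF that] by (auto intro: order_trans)
  qed
  then obtain x where x: "\<And>n. x \<in> S n" by blast
  then have xK: "x \<in> K" by (auto simp: S_def)
  have le: "\<And>n. h x \<le> ereal (t n)" using x by (auto simp: S_def)
  have "h x \<noteq> \<infinity>" using le[of 0] by auto
  then obtain r where hx: "h x = ereal r" using nm[of x] by (cases "h x") auto
  have rle: "r \<le> t n" for n using le[of n] hx by simp
  have "h x \<le> \<mu>"
  proof (cases "\<mu> = -\<infinity>")
    case True
    obtain n :: nat where "- r < real n" using reals_Archimedean2 by blast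
    then show ?thesis using rle[of n] True by (simp add: t_def)
  next
    case False
    then obtain m where mr: "\<mu> = ereal m" using \<open>\<mu> < \<infinity>\<close> by (cases \<mu>) auto
    have rle2: "r \<le> m + 1 / (real n + 1)" for n using rle[of n] False mr by (simp add: t_def)
    have "r \<le> m"
    proof (rule field_le_epsilon)
      fix e :: real assume "0 < e"
      then obtain n :: nat where "1 / of_nat (Suc n) < e" by (rule nat_approx_posE)
      then have "1 / (real n + 1) < e" by (simp add: add.commute)
      then show "r \<le> m + e" using rle2[of n] by linarith
    qed
    then show ?thesis using mr hx by simp
  qed
  then show ?thesis using xK mule by (meson order_trans)
qed

abbreviation prox_objective :: "real \<Rightarrow> ('a::euclidean_space \<Rightarrow> ereal) \<Rightarrow> 'a \<Rightarrow> 'a \<Rightarrow> ereal" where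
  "prox_objective \<gamma> F z y \<equiv> ereal \<gamma> * F y + ereal ((norm (y - z))\<^sup>2 / 2)"

lemma closed_le_continuous:
  fixes F :: "'a::metric_space \<Rightarrow> ereal" and d :: "'a \<Rightarrow> real"
  assumes cl: "\<And>c. closed {x. F x \<le> ereal c}" and d: "\<And>x. isCont d x"
  shows "closed {y. F y \<le> ereal (d y)}"
proof (rule closed_sequential_limits[THEN iffD2], intro allI impI, elim conjE)
  fix yk y assume yk: "\<forall>n. yk n \<in> {y. F y \<le> ereal (d y)}" and lim: "yk \<longlonglongrightarrow> y"
  have dlim: "(\<lambda>n. d (yk n)) \<longlonglongrightarrow> d y" by (rule isCont_tendsto_compose[OF d lim])
  have "F y \<le> ereal (d y) + ereal e" if e: "e > 0" for e
  proof -
    have "\<forall>\<^sub>F n in sequentially. d (yk n) < d y + e" using order_tendstoD(2)[OF dlim] e by simp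
    then have "\<forall>\<^sub>F n in sequentially. yk n \<in> {x. F x \<le> ereal (d y + e)}"
    proof eventually_elim
      case (elim n)
      have "F (yk n) \<le> ereal (d (yk n))" using yk by simp
      also have "\<dots> \<le> ereal (d y + e)" using elim by simp
      finally show ?case by simp
    qed
    from Lim_in_closed_set[OF cl this _ lim] show ?thesis by simp
  qed
  then have "F y \<le> ereal (d y)" by (rule ereal_le_epsilon2)
  then show "y \<in> {y. F y \<le> ereal (d y)}" by simp
qed

lemma prox_objective_sublevel_closed:
  fixes F :: "'a::euclidean_space \<Rightarrow> ereal"
  assumes F: "Gamma0 F" and g: "g > 0"
  shows "closed {y. prox_objective g F z y \<le> ereal c}"
proof -
  define d where "d y = (c - (norm (y - z))\<^sup>2 / 2) / g" for y
  have "prox_objective g F z y \<le> ereal c \<longleftrightarrow> F y \<le> ereal (d y)" for y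
  proof (cases "F y")
    case (real r)
    have "g * r + (norm (y - z))\<^sup>2 / 2 \<le> c \<longleftrightarrow> r * g \<le> c - (norm (y - z))\<^sup>2 / 2"
      by (simp add: mult.commute le_diff_eq)
    also have "\<dots> \<longleftrightarrow> r \<le> d y" unfolding d_def by (rule pos_le_divide_eq[OF g, symmetric])
    finally show ?thesis using real by simp
  next
    case PInf
    then show ?thesis using g by simp
  next
    case MInf
    then show ?thesis using Gamma0_neq_MInf[OF F, of y] by simp
  qed
  moreover have "isCont d y" for y unfolding d_def using g by (intro continuous_intros) auto
  then have "closed {y. F y \<le> ereal (d y)}"
    by (rule closed_le_continuous[OF Gamma0_sublevel_closed[OF F]])
  ultimately show ?thesis by simp
qed

lemma Gamma0_linear_lower_bound:
  fixes F :: "'a::euclidean_space \<Rightarrow> ereal"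
  assumes F: "Gamma0 F" and a: "F a = ereal fa"
  obtains K where "K \<ge> 0" "\<And>y r. F y = ereal r \<Longrightarrow> r \<ge> fa - K * (1 + norm (y - a))"
proof -
  have "\<exists>x\<in>cball a 1. \<forall>y\<in>cball a 1. F x \<le> F y"
    by (rule lsc_attains_min_on_compact[OF Gamma0_sublevel_closed[OF F]]) (auto simp: Gamma0_neq_MInf[OF F])
  then obtain x0 where x0: "x0 \<in> cball a 1" "\<And>y. y \<in> cball a 1 \<Longrightarrow> F x0 \<le> F y" by blast
  have "F x0 \<le> ereal fa" using x0(2)[of a] a by simp
  then obtain L where L: "F x0 = ereal L" using Gamma0_neq_MInf[OF F, of x0] by (cases "F x0") auto
  define K where "K = \<bar>L - fa\<bar>"
  have lo: "r \<ge> L" if "y \<in> cball a 1" "F y = ereal r" for y r using x0(2)[OF that(1)] L that(2) by simp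
  show ?thesis
  proof (rule that[of K])
    show "K \<ge> 0" by (simp add: K_def)
    fix y r assume fy: "F y = ereal r"
    show "r \<ge> fa - K * (1 + norm (y - a))"
    proof (cases "norm (y - a) \<le> 1")
      case True
      then have "r \<ge> L" using lo[of y r] fy by (simp add: dist_norm norm_minus_commute)
      moreover have "K * (1 + norm (y - a)) \<ge> K" using K_def by (simp add: mult_le_cancel_left1)
      ultimately show ?thesis unfolding K_def by linarith
    next
      case False
      define t where "t = norm (y - a)"
      have t1: "t > 1" using False t_def by simp
      define w where "w = (1 - 1/t) *\<^sub>R a + (1/t) *\<^sub>R y"
      have "w - a = (1/t) *\<^sub>R (y - a)" unfolding w_def by (simp add: algebra_simps)
      moreover have "y \<noteq> a" using t1 t_def by auto
      ultimately have "norm (w - a) = 1" using t1 t_def by simp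
      then have wc: "w \<in> cball a 1" by (simp add: dist_norm norm_minus_commute)
      have "F w \<le> ereal ((1 - 1/t) * fa + (1/t) * r)"
        using Gamma0_convex_ineq[OF F a fy, of "1/t"] t1 unfolding w_def by simp
      moreover obtain rw where "F w = ereal rw" using Gamma0_neq_MInf[OF F, of w] calculation by (cases "F w") auto
      ultimately have "L \<le> (1 - 1/t) * fa + (1/t) * r" using lo[OF wc] by force
      then have "t * L \<le> t * ((1 - 1/t) * fa + (1/t) * r)" using t1 by simp
      also have "\<dots> = (t - 1) * fa + r" using t1 by (simp add: field_simps)
      finally have "r \<ge> fa + t * (L - fa)" by (simp add: algebra_simps)
      moreover have "t * (L - fa) \<ge> - (K * t)" unfolding K_def using t1
        by (metis abs_ge_minus_self minus_diff_eq minus_mult_left mult.commute mult_le_cancel_left_pos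
            neg_le_iff_le order.trans zero_less_one le_less_trans order_less_imp_le abs_minus_commute) 
      moreover have "K * t \<le> K * (1 + t)" using K_def by (simp add: mult_left_mono)
      ultimately show ?thesis unfolding t_def by linarith
    qed
  qed
qed


lemma nonneg_if_nonneg_plus_small_multiples:
  fixes A B :: real
  assumes h: "\<And>t. 0 < t \<Longrightarrow> t \<le> 1 \<Longrightarrow> 0 \<le> A + t * B" and B: "B \<ge> 0"
  shows "0 \<le> A"
proof (rule ccontr)
  assume "\<not> 0 \<le> A"
  then have A: "A < 0" by simp
  define t where "t = min 1 (- A / (2 * (B + 1)))"
  have "- A / (2 * (B + 1)) > 0" using A B by (intro divide_pos_pos) auto
  then have t0: "t > 0" unfolding t_def by simp
  have t1: "t \<le> 1" unfolding t_def by simp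
  have "t \<le> - A / (2 * (B + 1))" unfolding t_def by simp
  then have "t * (B + 1) \<le> - A / 2" using B by (simp add: field_simps)
  moreover have "t * B \<le> t * (B + 1)" using t0 by simp
  ultimately have "A + t * B < 0" using A by linarith
  with h[OF t0 t1] show False by linarith
qed

lemma prox_objective_coercive:
  fixes F :: "'a::euclidean_space \<Rightarrow> ereal"
  assumes F: "Gamma0 F" and g: "\<gamma> > 0" and a: "F a = ereal fa"
  obtains R where "R \<ge> 0" "\<And>y. norm (y - z) > R \<Longrightarrow> prox_objective \<gamma> F z a < prox_objective \<gamma> F z y"
proof -
  obtain K where K: "K \<ge> 0" "\<And>y r. F y = ereal r \<Longrightarrow> r \<ge> fa - K * (1 + norm (y - a))"
    using Gamma0_linear_lower_bound[OF F a] by blast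
  define Q where "Q = (norm (a - z))\<^sup>2 / 2 + \<gamma> * K * (1 + norm (z - a))"
  define R where "R = 2 * \<gamma> * K + 2 * \<bar>Q\<bar> + 2"
  show ?thesis
  proof (rule that[of R])
    show "R \<ge> 0" unfolding R_def using g K by simp
    fix y assume yR: "norm (y - z) > R"
    show "prox_objective \<gamma> F z a < prox_objective \<gamma> F z y"
    proof (cases "F y")
      case MInf then show ?thesis using Gamma0_neq_MInf[OF F] by auto
    next
      case PInf then show ?thesis using g a by simp
    next
      case (real r)
      define s where "s = norm (y - z)"
      have "norm (y - a) \<le> s + norm (z - a)"
        unfolding s_def using norm_triangle_ineq[of "y - z" "z - a"] by simp
      then have "K * (1 + norm (y - a)) \<le> K * (1 + s + norm (z - a))"
        using K(1) by (simp add: mult_left_mono)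
      then have "r \<ge> fa - K * (1 + s + norm (z - a))" using K(2)[OF real] by linarith
      then have "\<gamma> * r \<ge> \<gamma> * (fa - K * (1 + s + norm (z - a)))" using g by (simp add: mult_left_mono)
      then have r2: "\<gamma> * r \<ge> \<gamma> * fa - \<gamma> * K * s - \<gamma> * K * (1 + norm (z - a))"
        by (simp add: algebra_simps)
      have s1: "s / 2 - \<gamma> * K \<ge> \<bar>Q\<bar> + 1" using yR unfolding s_def R_def by simp
      have s2: "s \<ge> 1" using yR R_def g K unfolding s_def by (smt (verit) mult_nonneg_nonneg)
      have "s * (s / 2 - \<gamma> * K) \<ge> 1 * (\<bar>Q\<bar> + 1)" using s1 s2 by (intro mult_mono) auto
      then have "s\<^sup>2 / 2 - \<gamma> * K * s > Q" by (simp add: power2_eq_square algebra_simps)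
      then have "\<gamma> * r + s\<^sup>2 / 2 > \<gamma> * fa + (norm (a - z))\<^sup>2 / 2"
        using r2 unfolding Q_def by (simp add: algebra_simps)
      then show ?thesis using a real unfolding s_def by simp
    qed
  qed
qed

lemma prox_objective_has_minimizer:
  fixes F :: "'a::euclidean_space \<Rightarrow> ereal"
  assumes F: "Gamma0 F" and g: "\<gamma> > 0"
  shows "\<exists>p. \<forall>y. prox_objective \<gamma> F z p \<le> prox_objective \<gamma> F z y"
proof -
  obtain a fa where a: "F a = ereal fa" using Gamma0_dom_nonempty[OF F] by blast
  obtain R where R: "R \<ge> 0" "\<And>y. norm (y - z) > R \<Longrightarrow> prox_objective \<gamma> F z a < prox_objective \<gamma> F z y"
    using prox_objective_coercive[OF F g a] by blast
  have "prox_objective \<gamma> F z y \<noteq> -\<infinity>" for y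
    using Gamma0_neq_MInf[OF F, of y] g by (cases "F y") auto
  then have "\<exists>p\<in>cball z R. \<forall>y\<in>cball z R. prox_objective \<gamma> F z p \<le> prox_objective \<gamma> F z y"
    by (intro lsc_attains_min_on_compact prox_objective_sublevel_closed[OF F g]) (use R in auto)
  then obtain p where p: "\<And>y. y \<in> cball z R \<Longrightarrow> prox_objective \<gamma> F z p \<le> prox_objective \<gamma> F z y"
    by blast
  have "a \<in> cball z R" using R(2)[of a] by (force simp: dist_norm norm_minus_commute)
  then have "prox_objective \<gamma> F z p \<le> prox_objective \<gamma> F z a" using p by blast
  then have "prox_objective \<gamma> F z p \<le> prox_objective \<gamma> F z y" for y
    using p[of y] R(2)[of y] by (force simp: dist_norm norm_minus_commute)
  then show ?thesis by blast
qed

lemma prox_minimizes: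
  fixes F :: "'a::euclidean_space \<Rightarrow> ereal"
  assumes F: "Gamma0 F" and g: "\<gamma> > 0"
  shows "prox_objective \<gamma> F z (prox \<gamma> F z) \<le> prox_objective \<gamma> F z y"
  using someI_ex[OF prox_objective_has_minimizer[OF F g, of z]] unfolding prox_def by blast

lemma prox_subgradient:
  fixes F :: "'a::euclidean_space \<Rightarrow> ereal"
  assumes F: "Gamma0 F" and g: "\<gamma> > 0"
  shows "(1 / \<gamma>) *\<^sub>R (z - prox \<gamma> F z) \<in> subdiff F (prox \<gamma> F z)"
proof -
  define p where "p = prox \<gamma> F z"
  have hm: "prox_objective \<gamma> F z p \<le> prox_objective \<gamma> F z y" for y
    unfolding p_def by (rule prox_minimizes[OF F g])
  obtain a fa where a: "F a = ereal fa" using Gamma0_dom_nonempty[OF F] by blast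
  have "F p \<noteq> \<infinity>" using hm[of a] a g by auto
  then obtain fp where fp: "F p = ereal fp" using Gamma0_neq_MInf[OF F, of p] by (cases "F p") auto
  show ?thesis unfolding p_def[symmetric]
  proof (rule subdiffI[OF F fp])
    fix y fy assume fy: "F y = ereal fy"
    define A where "A = \<gamma> * (fy - fp) + (p - z) \<bullet> (y - p)"
    define B where "B = (norm (y - p))\<^sup>2 / 2"
    have Hm: "0 \<le> A + t * B" if t: "0 < t" "t \<le> 1" for t
    proof -
      define pt where "pt = (1 - t) *\<^sub>R p + t *\<^sub>R y"
      have c: "F pt \<le> ereal ((1 - t) * fp + t * fy)"
        using Gamma0_convex_ineq[OF F fp fy, of t] t unfolding pt_def by simp
      then obtain rt where rt: "F pt = ereal rt" using Gamma0_neq_MInf[OF F, of pt] by (cases "F pt") auto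
      have rtle: "rt \<le> (1 - t) * fp + t * fy" using c rt by simp
      have "\<gamma> * fp + (norm (p - z))\<^sup>2 / 2 \<le> \<gamma> * rt + (norm (pt - z))\<^sup>2 / 2"
        using hm[of pt] fp rt by simp
      moreover have "\<gamma> * rt \<le> \<gamma> * ((1 - t) * fp + t * fy)" using rtle g by simp
      moreover have e: "pt - z = (p - z) + t *\<^sub>R (y - p)" unfolding pt_def by (simp add: algebra_simps)
      have "(norm ((p - z) + t *\<^sub>R (y - p)))\<^sup>2 = (norm (p - z))\<^sup>2 + 2 * t * ((p - z) \<bullet> (y - p)) + t\<^sup>2 * (norm (y - p))\<^sup>2"
        unfolding power2_norm_eq_inner by (simp add: inner_add_left inner_add_right inner_commute power2_eq_square)
      then have "(norm (pt - z))\<^sup>2 = (norm (p - z))\<^sup>2 + 2 * t * ((p - z) \<bullet> (y - p)) + t\<^sup>2 * (norm (y - p))\<^sup>2"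
        unfolding e .
      moreover have "\<gamma> * ((1 - t) * fp + t * fy) = \<gamma> * fp + t * (\<gamma> * (fy - fp))" by (simp add: algebra_simps)
      ultimately have "0 \<le> t * (\<gamma> * (fy - fp)) + t * ((p - z) \<bullet> (y - p)) + t\<^sup>2 * (norm (y - p))\<^sup>2 / 2"
        by linarith
      then have "0 \<le> t * (A + t * B)" unfolding A_def B_def by (simp add: algebra_simps power2_eq_square)
      then show ?thesis using t by (simp add: zero_le_mult_iff)
    qed
    have B0: "0 \<le> B" unfolding B_def by simp
    have "0 \<le> A" by (rule nonneg_if_nonneg_plus_small_multiples[OF Hm B0])
    then have "(z - p) \<bullet> (y - p) \<le> \<gamma> * (fy - fp)" unfolding A_def
      by (simp add: inner_diff_left algebra_simps)
    then have "((z - p) \<bullet> (y - p)) / \<gamma> \<le> fy - fp" using g by (simp add: pos_divide_le_eq mult.commute)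
    then have "((1 / \<gamma>) *\<^sub>R (z - p)) \<bullet> (y - p) \<le> fy - fp" by simp
    then show "fp + ((1 / \<gamma>) *\<^sub>R (z - p)) \<bullet> (y - p) \<le> fy" by simp
  qed
qed

lemma prox_eqI:
  fixes F :: "'a::euclidean_space \<Rightarrow> ereal"
  assumes F: "Gamma0 F" and g: "\<gamma> > 0" and p: "(1 / \<gamma>) *\<^sub>R (z - p) \<in> subdiff F p"
  shows "prox \<gamma> F z = p"
proof -
  define q where "q = prox \<gamma> F z"
  have q: "(1 / \<gamma>) *\<^sub>R (z - q) \<in> subdiff F q" unfolding q_def by (rule prox_subgradient[OF F g])
  have "((1 / \<gamma>) *\<^sub>R (z - p) - (1 / \<gamma>) *\<^sub>R (z - q)) \<bullet> (p - q) \<ge> 0"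
    by (rule subdiff_monotone[OF F p q])
  moreover have "(1 / \<gamma>) *\<^sub>R (z - p) - (1 / \<gamma>) *\<^sub>R (z - q) = - (1 / \<gamma>) *\<^sub>R (p - q)"
    by (simp add: algebra_simps)
  ultimately have "- (1 / \<gamma>) * ((p - q) \<bullet> (p - q)) \<ge> 0" by simp
  then have "(p - q) \<bullet> (p - q) \<le> 0" using g by (simp add: divide_le_0_iff)
  then have "(p - q) \<bullet> (p - q) = 0" using inner_ge_zero[of "p - q"] by linarith
  then show ?thesis unfolding q_def[symmetric] by simp
qed

lemma prox_firmly_nonexpansive:
  fixes F :: "'a::euclidean_space \<Rightarrow> ereal"
  assumes F: "Gamma0 F" and g: "\<gamma> > 0"
  shows "(norm (prox \<gamma> F z - prox \<gamma> F w))\<^sup>2 \<le> (z - w) \<bullet> (prox \<gamma> F z - prox \<gamma> F w)"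
proof -
  define p q where "p = prox \<gamma> F z" "q = prox \<gamma> F w"
  have "((1 / \<gamma>) *\<^sub>R (z - p) - (1 / \<gamma>) *\<^sub>R (w - q)) \<bullet> (p - q) \<ge> 0"
    unfolding p_q_def by (rule subdiff_monotone[OF F prox_subgradient[OF F g] prox_subgradient[OF F g]])
  moreover have "(1 / \<gamma>) *\<^sub>R (z - p) - (1 / \<gamma>) *\<^sub>R (w - q) = (1 / \<gamma>) *\<^sub>R ((z - w) - (p - q))"
    by (simp add: algebra_simps)
  ultimately have "(1 / \<gamma>) * (((z - w) - (p - q)) \<bullet> (p - q)) \<ge> 0" by simp
  then have "((z - w) - (p - q)) \<bullet> (p - q) \<ge> 0" using g by (simp add: zero_le_divide_iff)
  then show ?thesis unfolding p_q_def[symmetric] by (simp add: inner_diff_left power2_norm_eq_inner)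
qed

lemma prox_nonexpansive:
  fixes F :: "'a::euclidean_space \<Rightarrow> ereal"
  assumes F: "Gamma0 F" and g: "\<gamma> > 0"
  shows "norm (prox \<gamma> F z - prox \<gamma> F w) \<le> norm (z - w)"
proof -
  define d where "d = prox \<gamma> F z - prox \<gamma> F w"
  have "(norm d)\<^sup>2 \<le> (z - w) \<bullet> d" unfolding d_def by (rule prox_firmly_nonexpansive[OF F g])
  also have "\<dots> \<le> norm (z - w) * norm d" by (rule norm_cauchy_schwarz)
  finally have "norm d * norm d \<le> norm (z - w) * norm d" by (simp add: power2_eq_square)
  then show ?thesis unfolding d_def[symmetric]
    by (metis mult_right_le_imp_le norm_ge_zero order_le_less zero_less_norm_iff mult_zero_right)
qed

lemma rprox_nonexpansive:
  fixes F :: "'a::euclidean_space \<Rightarrow> ereal"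
  assumes F: "Gamma0 F" and g: "\<gamma> > 0"
  shows "norm (rprox \<gamma> F z - rprox \<gamma> F w) \<le> norm (z - w)"
proof -
  define d where "d = prox \<gamma> F z - prox \<gamma> F w"
  have f: "(norm d)\<^sup>2 \<le> (z - w) \<bullet> d" unfolding d_def by (rule prox_firmly_nonexpansive[OF F g])
  have e: "rprox \<gamma> F z - rprox \<gamma> F w = 2 *\<^sub>R d - (z - w)" unfolding rprox_def d_def by (simp add: algebra_simps)
  have "(norm (2 *\<^sub>R d - (z - w)))\<^sup>2 = 4 * (norm d)\<^sup>2 - 4 * ((z - w) \<bullet> d) + (norm (z - w))\<^sup>2"
    by (simp add: power2_norm_eq_inner inner_diff_left inner_diff_right inner_commute algebra_simps)
  also have "\<dots> \<le> (norm (z - w))\<^sup>2" using f by simp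
  finally show ?thesis unfolding e by (simp add: power2_le_iff_abs_le[symmetric] power_mono_iff)
qed
lemma convex_separation_from_zero:
  fixes D :: "'b::euclidean_space set"
  assumes "convex D" "0 \<notin> D"
  obtains w where "\<And>d. d \<in> D \<Longrightarrow> 0 \<le> w \<bullet> d" "\<And>d. d \<in> rel_interior D \<Longrightarrow> 0 < w \<bullet> d"
proof (cases "0 \<in> closure D")
  case True
  have ri: "rel_interior (closure D) = rel_interior D" by (rule convex_rel_interior_closure[OF assms(1)])
  have "0 \<notin> rel_interior (closure D)" unfolding ri using assms(2) rel_interior_subset by blast
  from supporting_hyperplane_rel_boundary[OF convex_closure[OF assms(1)] True this]
  obtain a where "\<And>y. y \<in> closure D \<Longrightarrow> a \<bullet> 0 \<le> a \<bullet> y" "\<And>y. y \<in> rel_interior (closure D) \<Longrightarrow> a \<bullet> 0 < a \<bullet> y"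
    by metis
  then show ?thesis using that[of a] closure_subset ri by auto
next
  case False
  from separating_hyperplane_closed_point[OF convex_closure[OF assms(1)] closed_closure False]
  obtain a b where ab: "a \<bullet> 0 < b" "\<forall>x\<in>closure D. a \<bullet> x > b" by blast
  have pos: "0 < a \<bullet> d" if "d \<in> D" for d
  proof -
    have "d \<in> closure D" using that closure_subset by blast
    then have "a \<bullet> d > b" using ab(2) by blast
    then show ?thesis using ab(1) by simp
  qed
  show ?thesis
  proof (rule that[of a])
    show "0 \<le> a \<bullet> d" if "d \<in> D" for d using pos[OF that] by simp
    show "0 < a \<bullet> d" if "d \<in> rel_interior D" for d using pos that rel_interior_subset by blast
  qed
qed

lemma rel_interior_supporting_flat:
  fixes S :: "'a::euclidean_space set"
  assumes S: "convex S" and c: "c \<in> rel_interior S" and h: "\<And>x. x \<in> S \<Longrightarrow> 0 \<le> a \<bullet> (x - c)"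
    and x: "x \<in> S"
  shows "a \<bullet> x = a \<bullet> c"
proof (cases "x = c")
  case True then show ?thesis by simp
next
  case False
  have "x \<in> affine hull S" by (rule hull_inc[OF x])
  then obtain m where m: "m > 1" "\<And>e. e > 1 \<and> e \<le> m \<Longrightarrow> (1 - e) *\<^sub>R x + e *\<^sub>R c \<in> S"
    using convex_rel_interior_if[OF S c] by blast
  have mem: "(1 - m) *\<^sub>R x + m *\<^sub>R c \<in> S" using m(2)[of m] m(1) by simp
  have "0 \<le> a \<bullet> ((1 - m) *\<^sub>R x + m *\<^sub>R c - c)" by (rule h[OF mem])
  also have "a \<bullet> ((1 - m) *\<^sub>R x + m *\<^sub>R c - c) = (1 - m) * (a \<bullet> (x - c))"
    by (simp add: algebra_simps inner_diff_right inner_add_right)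
  finally have "a \<bullet> (x - c) \<le> 0" using m(1) by (simp add: zero_le_mult_iff)
  with h[OF x] show ?thesis by (simp add: inner_diff_right)
qed

lemma Gamma0_shifted_epigraph_convex:
  assumes F: "Gamma0 F" shows "convex {(x, s). F x \<le> ereal (s + c)}"
  unfolding convex_alt
proof (clarsimp)
  fix x1 s1 x2 s2 and u :: real
  assume h: "F x1 \<le> ereal (s1 + c)" "F x2 \<le> ereal (s2 + c)" "0 \<le> u" "u \<le> 1"
  obtain r1 r2 where r: "F x1 = ereal r1" "F x2 = ereal r2"
    using h Gamma0_neq_MInf[OF F, of x1] Gamma0_neq_MInf[OF F, of x2] by (cases "F x1"; cases "F x2") auto
  have "F ((1 - u) *\<^sub>R x1 + u *\<^sub>R x2) \<le> ereal ((1 - u) * r1 + u * r2)"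
    using Gamma0_convex_ineq[OF F r] h by simp
  also have "(1 - u) * r1 + u * r2 \<le> (1 - u) * (s1 + c) + u * (s2 + c)"
    using h r by (intro add_mono mult_left_mono) auto
  finally show "F ((1 - u) *\<^sub>R x1 + u *\<^sub>R x2) \<le> ereal ((1 - u) * s1 + u * s2 + c)"
    by (simp add: algebra_simps)
qed

lemma Gamma0_strict_hypograph_convex:
  assumes F: "Gamma0 F" shows "convex {(x, s). F x < ereal (c - s)}"
  unfolding convex_alt
proof (clarsimp)
  fix x1 s1 x2 s2 and u :: real
  assume h: "F x1 < ereal (c - s1)" "F x2 < ereal (c - s2)" "0 \<le> u" "u \<le> 1"
  obtain r1 r2 where r: "F x1 = ereal r1" "F x2 = ereal r2"
    using h Gamma0_neq_MInf[OF F, of x1] Gamma0_neq_MInf[OF F, of x2] by (cases "F x1"; cases "F x2") auto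
  have "F ((1 - u) *\<^sub>R x1 + u *\<^sub>R x2) \<le> ereal ((1 - u) * r1 + u * r2)"
    using Gamma0_convex_ineq[OF F r] h by simp
  also have "(1 - u) * r1 + u * r2 < (1 - u) * (c - s1) + u * (c - s2)"
  proof -
    have "r1 < c - s1" "r2 < c - s2" using h r by auto
    show ?thesis
    proof (cases "u = 0")
      case False
      then have "u * r2 < u * (c - s2)" using h(3) \<open>r2 < c - s2\<close> by simp
      moreover have "(1 - u) * r1 \<le> (1 - u) * (c - s1)"
        using h(4) \<open>r1 < c - s1\<close> by (intro mult_left_mono) auto
      ultimately show ?thesis by linarith
    qed (use \<open>r1 < c - s1\<close> in simp)
  qed
  finally show "F ((1 - u) *\<^sub>R x1 + u *\<^sub>R x2) < ereal (c - ((1 - u) * s1 + u * s2))"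
    by (simp add: algebra_simps)
qed

lemma rel_interior_separation_flat:
  fixes S T :: "'a::euclidean_space set"
  assumes S: "convex S" and T: "convex T" and c: "c \<in> rel_interior S" "c \<in> rel_interior T"
    and sep: "\<And>x y. x \<in> S \<Longrightarrow> y \<in> T \<Longrightarrow> 0 \<le> a \<bullet> (x - y)"
  shows "\<And>x. x \<in> S \<Longrightarrow> a \<bullet> x = a \<bullet> c" and "\<And>y. y \<in> T \<Longrightarrow> a \<bullet> y = a \<bullet> c"
proof -
  have cST: "c \<in> S" "c \<in> T" using c rel_interior_subset by blast+
  show "a \<bullet> x = a \<bullet> c" if "x \<in> S" for x
    by (rule rel_interior_supporting_flat[OF S c(1) _ that]) (use sep cST(2) in blast)
  show "a \<bullet> y = a \<bullet> c" if "y \<in> T" for y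
    using rel_interior_supporting_flat[OF T c(2), of "- a" y] sep[OF cST(1)] that
    by (simp add: inner_diff_right)
qed

text \<open>
  The separating hyperplane between the epigraph of \<open>J - J(m)\<close> and the strict hypograph of
  \<open>G(m) - G\<close> is non-vertical: a vertical one would be constant on both domains, which the
  common relative interior point rules out.
\<close>
lemma minimizer_epigraph_separation:
  fixes J G :: "'a::euclidean_space \<Rightarrow> ereal"
  assumes J: "Gamma0 J" and G: "Gamma0 G"
    and c: "c \<in> rel_interior (edom J)" "c \<in> rel_interior (edom G)"
    and Jm: "J m = ereal Jm" and Gm: "G m = ereal Gm"
    and m: "\<forall>y. J m + G m \<le> J y + G y"
  obtains a \<alpha> where "\<alpha> > 0"
    "\<And>x1 s1 x2 s2. J x1 \<le> ereal (s1 + Jm) \<Longrightarrow> G x2 < ereal (Gm - s2) \<Longrightarrow>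
       0 \<le> a \<bullet> (x1 - x2) + \<alpha> * (s1 - s2)"
proof -
  define C1 where "C1 = {(x, s). J x \<le> ereal (s + Jm)}"
  define C2 where "C2 = {(x, s). G x < ereal (Gm - s)}"
  define D where "D = (\<Union>u\<in>C1. \<Union>v\<in>C2. {u - v})"
  have cD: "convex D" unfolding D_def C1_def C2_def
    by (intro convex_differences Gamma0_shifted_epigraph_convex Gamma0_strict_hypograph_convex J G)
  have D0: "0 \<notin> D"
  proof
    assume "0 \<in> D"
    then obtain x s where h: "J x \<le> ereal (s + Jm)" "G x < ereal (Gm - s)"
      unfolding D_def C1_def C2_def by auto
    obtain r1 r2 where r: "J x = ereal r1" "G x = ereal r2"
      using h Gamma0_neq_MInf[OF J, of x] Gamma0_neq_MInf[OF G, of x] by (cases "J x"; cases "G x") auto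
    have "Jm + Gm \<le> r1 + r2" using m Jm Gm r by (metis plus_ereal.simps(1) ereal_less_eq(3))
    moreover have "r1 \<le> s + Jm" "r2 < Gm - s" using h r by auto
    ultimately show False by linarith
  qed
  have "(m, 0) \<in> C1" "(m, -1) \<in> C2" unfolding C1_def C2_def using Jm Gm by auto
  then have "(0, 1) \<in> D" unfolding D_def by force
  then have Dne: "D \<noteq> {}" by blast
  obtain w where w: "\<And>d. d \<in> D \<Longrightarrow> 0 \<le> w \<bullet> d" "\<And>d. d \<in> rel_interior D \<Longrightarrow> 0 < w \<bullet> d"
    using convex_separation_from_zero[OF cD D0] by blast
  obtain a \<alpha> where wa: "w = (a, \<alpha>)" by (cases w)
  have H: "0 \<le> a \<bullet> (x1 - x2) + \<alpha> * (s1 - s2)"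
    if "J x1 \<le> ereal (s1 + Jm)" "G x2 < ereal (Gm - s2)" for x1 s1 x2 s2
  proof -
    have "(x1, s1) - (x2, s2) \<in> D" unfolding D_def C1_def C2_def using that by blast
    from w(1)[OF this] show ?thesis by (simp add: wa)
  qed
  have "\<alpha> \<noteq> 0"
  proof
    assume \<alpha>: "\<alpha> = 0"
    have "0 \<le> a \<bullet> (x1 - x2)" if "x1 \<in> edom J" "x2 \<in> edom G" for x1 x2
    proof -
      have "J x1 < \<infinity>" "G x2 < \<infinity>" using that by (simp_all add: edom_def)
      then obtain r1 r2 where "J x1 = ereal r1" "G x2 = ereal r2" by (meson Gamma0_finiteE J G)
      then show ?thesis using H[of x1 "r1 - Jm" x2 "Gm - r2 - 1"] \<alpha> by simp
    qed
    note flat = rel_interior_separation_flat[OF Gamma0_edom_convex[OF J] Gamma0_edom_convex[OF G] c this]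
    have "w \<bullet> d = 0" if "d \<in> D" for d
    proof -
      from that obtain x1 s1 x2 s2 where d: "d = (x1, s1) - (x2, s2)" "(x1, s1) \<in> C1" "(x2, s2) \<in> C2"
        unfolding D_def by auto
      have "x1 \<in> edom J" using d(2) unfolding C1_def edom_def by (auto intro: le_less_trans)
      moreover have "x2 \<in> edom G" using d(3) unfolding C2_def edom_def by (auto intro: less_trans)
      ultimately show ?thesis using flat d(1) \<alpha> by (simp add: wa inner_diff_right)
    qed
    moreover obtain d where "d \<in> rel_interior D" using rel_interior_eq_empty[OF cD] Dne by blast
    ultimately show False using w(2) rel_interior_subset by (metis less_irrefl subsetD)
  qed
  moreover have "\<alpha> \<ge> 0" using H[of m 0 m "-1"] Jm Gm by simp
  ultimately have "\<alpha> > 0" by simp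
  then show ?thesis by (rule that) (rule H)
qed

lemma minimizer_opposite_subgradients:
  fixes J G :: "'a::euclidean_space \<Rightarrow> ereal"
  assumes J: "Gamma0 J" and G: "Gamma0 G"
    and ri: "rel_interior (edom J) \<inter> rel_interior (edom G) \<noteq> {}"
    and m: "\<forall>y. J m + G m \<le> J y + G y"
  obtains u where "u \<in> subdiff J m" "- u \<in> subdiff G m"
proof -
  obtain c where c: "c \<in> rel_interior (edom J)" "c \<in> rel_interior (edom G)" using ri by blast
  then obtain Jc Gc where "J c = ereal Jc" "G c = ereal Gc"
    using rel_interior_subset unfolding edom_def by (metis Gamma0_finiteE G J mem_Collect_eq subsetD)
  then have "J m + G m \<le> ereal (Jc + Gc)" using m[rule_format, of c] by simp
  then obtain Jm Gm where Jm: "J m = ereal Jm" and Gm: "G m = ereal Gm"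
    using Gamma0_neq_MInf[OF J, of m] Gamma0_neq_MInf[OF G, of m] by (cases "J m"; cases "G m") auto
  obtain a \<alpha> where ap: "\<alpha> > 0" and H: "\<And>x1 s1 x2 s2. J x1 \<le> ereal (s1 + Jm) \<Longrightarrow>
      G x2 < ereal (Gm - s2) \<Longrightarrow> 0 \<le> a \<bullet> (x1 - x2) + \<alpha> * (s1 - s2)"
    using minimizer_epigraph_separation[OF J G c Jm Gm m] by metis
  define g where "g = - (1 / \<alpha>) *\<^sub>R a"
  have "g \<in> subdiff J m"
  proof (rule subdiffI[OF J Jm])
    fix y r assume r: "J y = ereal r"
    have "0 \<le> a \<bullet> (y - m) + \<alpha> * (r - Jm)"
    proof (rule field_le_epsilon)
      fix e :: real assume e: "e > 0"
      have "0 \<le> a \<bullet> (y - m) + \<alpha> * ((r - Jm) - (- (e / \<alpha>)))"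
        using H[of y "r - Jm" m "- (e / \<alpha>)"] r Gm e ap by simp
      then show "0 \<le> a \<bullet> (y - m) + \<alpha> * (r - Jm) + e" using ap by (simp add: algebra_simps)
    qed
    then have "- (a \<bullet> (y - m)) \<le> (r - Jm) * \<alpha>" by (simp add: mult.commute)
    then have "- (a \<bullet> (y - m)) / \<alpha> \<le> r - Jm" by (rule pos_divide_le_eq[OF ap, THEN iffD2])
    then show "Jm + g \<bullet> (y - m) \<le> r" unfolding g_def by simp
  qed
  moreover have "- g \<in> subdiff G m"
  proof (rule subdiffI[OF G Gm])
    fix y r assume r: "G y = ereal r"
    have "0 \<le> a \<bullet> (m - y) + \<alpha> * (r - Gm)"
    proof (rule field_le_epsilon)
      fix e :: real assume e: "e > 0"
      have "0 \<le> a \<bullet> (m - y) + \<alpha> * (0 - (Gm - r - e / \<alpha>))"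
        using H[of m 0 y "Gm - r - e / \<alpha>"] r Jm e ap by simp
      then show "0 \<le> a \<bullet> (m - y) + \<alpha> * (r - Gm) + e" using ap by (simp add: algebra_simps)
    qed
    then have "a \<bullet> (y - m) \<le> (r - Gm) * \<alpha>" by (simp add: mult.commute inner_diff_right)
    then have "(a \<bullet> (y - m)) / \<alpha> \<le> r - Gm" by (rule pos_divide_le_eq[OF ap, THEN iffD2])
    then show "Gm + (- g) \<bullet> (y - m) \<le> r" unfolding g_def by simp
  qed
  ultimately show ?thesis using that by blast
qed

lemma norm_convex_comb_square:
  fixes a b :: "'a::real_inner"
  shows "(norm ((1 - m) *\<^sub>R a + m *\<^sub>R b))\<^sup>2
    = (1 - m) * (norm a)\<^sup>2 + m * (norm b)\<^sup>2 - m * (1 - m) * (norm (a - b))\<^sup>2"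
  unfolding power2_norm_eq_inner
  by (simp add: inner_add_left inner_add_right inner_diff_left inner_diff_right inner_commute algebra_simps)

locale krasnoselskii_mann =
  fixes R :: "'a::euclidean_space \<Rightarrow> 'a" and \<mu> :: "nat \<Rightarrow> real" and z :: "nat \<Rightarrow> 'a"
  assumes nonexpansive: "\<And>a b. norm (R a - R b) \<le> norm (a - b)"
    and step_pos: "\<And>k. 0 < \<mu> k" and step_le_1: "\<And>k. \<mu> k \<le> 1"
    and step_sum: "filterlim (\<lambda>n. \<Sum>k<n. \<mu> k * (1 - \<mu> k)) at_top sequentially"
    and iteration: "\<And>k. z (Suc k) = z k + \<mu> k *\<^sub>R (R (z k) - z k)"
begin

definition residual :: "nat \<Rightarrow> real" where
  "residual k = norm (R (z k) - z k)"

lemma fejer_ineq: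
  assumes q: "R q = q"
  shows "(norm (z (Suc k) - q))\<^sup>2 \<le> (norm (z k - q))\<^sup>2 - \<mu> k * (1 - \<mu> k) * (residual k)\<^sup>2"
proof -
  have "z (Suc k) - q = (1 - \<mu> k) *\<^sub>R (z k - q) + \<mu> k *\<^sub>R (R (z k) - q)"
    using iteration[of k] by (simp add: algebra_simps)
  then have "(norm (z (Suc k) - q))\<^sup>2 = (1 - \<mu> k) * (norm (z k - q))\<^sup>2 + \<mu> k * (norm (R (z k) - q))\<^sup>2
      - \<mu> k * (1 - \<mu> k) * (norm ((z k - q) - (R (z k) - q)))\<^sup>2"
    by (simp add: norm_convex_comb_square)
  moreover have "norm (R (z k) - q) \<le> norm (z k - q)" using nonexpansive[of "z k" q] q by simp
  then have "\<mu> k * (norm (R (z k) - q))\<^sup>2 \<le> \<mu> k * (norm (z k - q))\<^sup>2"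
    using step_pos[of k] by (simp add: power_mono)
  moreover have "norm ((z k - q) - (R (z k) - q)) = residual k"
    by (simp add: residual_def norm_minus_commute)
  ultimately show ?thesis by (simp add: algebra_simps)
qed

lemma dist_fixed_point_decreasing:
  assumes "R q = q"
  shows "norm (z (Suc k) - q) \<le> norm (z k - q)"
proof -
  have "\<mu> k * (1 - \<mu> k) * (residual k)\<^sup>2 \<ge> 0" using step_pos[of k] step_le_1[of k] by simp
  then have "(norm (z (Suc k) - q))\<^sup>2 \<le> (norm (z k - q))\<^sup>2" using fejer_ineq[OF assms, of k] by linarith
  then show ?thesis by (simp add: power2_le_iff_abs_le[symmetric] power_mono_iff)
qed

lemma residual_decseq: "decseq residual"
proof (rule decseq_SucI)
  fix k
  have "R (z (Suc k)) - z (Suc k) = (R (z (Suc k)) - R (z k)) + (1 - \<mu> k) *\<^sub>R (R (z k) - z k)"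
    using iteration[of k] by (simp add: algebra_simps)
  then have "residual (Suc k) \<le> norm (R (z (Suc k)) - R (z k)) + norm ((1 - \<mu> k) *\<^sub>R (R (z k) - z k))"
    unfolding residual_def by (metis norm_triangle_ineq)
  also have "norm (R (z (Suc k)) - R (z k)) \<le> norm (z (Suc k) - z k)" by (rule nonexpansive)
  also have "norm (z (Suc k) - z k) = \<mu> k * residual k"
    using iteration[of k] step_pos[of k] unfolding residual_def by simp
  also have "norm ((1 - \<mu> k) *\<^sub>R (R (z k) - z k)) = (1 - \<mu> k) * residual k"
    using step_le_1[of k] unfolding residual_def by simp
  finally show "residual (Suc k) \<le> residual k" by (simp add: algebra_simps)
qed

lemma weighted_residual_sum_bounded:
  assumes "R q = q"
  shows "(\<Sum>k<n. \<mu> k * (1 - \<mu> k) * (residual k)\<^sup>2) \<le> (norm (z 0 - q))\<^sup>2"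
proof -
  have "(\<Sum>k<n. \<mu> k * (1 - \<mu> k) * (residual k)\<^sup>2) \<le> (norm (z 0 - q))\<^sup>2 - (norm (z n - q))\<^sup>2"
  proof (induction n)
    case (Suc n)
    then show ?case using fejer_ineq[OF assms, of n] by simp
  qed simp
  then show ?thesis by (smt (verit) zero_le_power2)
qed

lemma residual_tendsto_zero:
  assumes q: "R q = q"
  shows "residual \<longlonglongrightarrow> 0"
proof -
  have "\<exists>N. residual N < r" if r: "r > 0" for r
  proof (rule ccontr)
    assume "\<not> (\<exists>N. residual N < r)"
    then have ge: "r\<^sup>2 \<le> (residual k)\<^sup>2" for k using r by (simp add: not_less power_mono)
    obtain n where n: "(norm (z 0 - q))\<^sup>2 / r\<^sup>2 + 1 \<le> (\<Sum>k<n. \<mu> k * (1 - \<mu> k))"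
      using step_sum unfolding filterlim_at_top eventually_sequentially by blast
    have "(\<Sum>k<n. \<mu> k * (1 - \<mu> k)) * r\<^sup>2 = (\<Sum>k<n. \<mu> k * (1 - \<mu> k) * r\<^sup>2)"
      by (simp add: sum_distrib_right)
    also have "\<dots> \<le> (\<Sum>k<n. \<mu> k * (1 - \<mu> k) * (residual k)\<^sup>2)"
      using ge step_pos step_le_1 by (intro sum_mono mult_left_mono) (auto simp: less_imp_le)
    also have "\<dots> \<le> (norm (z 0 - q))\<^sup>2" by (rule weighted_residual_sum_bounded[OF q])
    finally have "(\<Sum>k<n. \<mu> k * (1 - \<mu> k)) * r\<^sup>2 \<le> (norm (z 0 - q))\<^sup>2" .
    moreover have "((norm (z 0 - q))\<^sup>2 / r\<^sup>2 + 1) * r\<^sup>2 \<le> (\<Sum>k<n. \<mu> k * (1 - \<mu> k)) * r\<^sup>2"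
      using n r by (simp add: mult_right_mono)
    moreover have "((norm (z 0 - q))\<^sup>2 / r\<^sup>2 + 1) * r\<^sup>2 = (norm (z 0 - q))\<^sup>2 + r\<^sup>2"
      using r by (simp add: field_simps)
    ultimately show False using r by (smt (verit) zero_less_power)
  qed
  then show ?thesis
    using residual_decseq unfolding decseq_def residual_def
    by (intro LIMSEQ_I) (metis diff_zero le_less_trans norm_ge_zero real_norm_def abs_of_nonneg)
qed

lemma bounded_iterates:
  assumes q: "R q = q"
  shows "bounded (range z)"
proof -
  have "norm (z k - q) \<le> norm (z 0 - q)" for k
    by (induction k) (use dist_fixed_point_decreasing[OF q] in \<open>auto intro: order_trans\<close>)
  then have "norm (z k) \<le> norm q + norm (z 0 - q)" for k
    using norm_triangle_sub[of "z k" q] by (smt (verit))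
  then show ?thesis unfolding bounded_iff by blast
qed

text \<open>
  A cluster point of the bounded iterates is a fixed point since the residual vanishes; as the
  distance to a fixed point never increases, the whole sequence converges to it.
\<close>
theorem converges_to_fixed_point:
  assumes q: "R q = q"
  obtains zs where "z \<longlonglongrightarrow> zs" "R zs = zs"
proof -
  obtain zs r where r: "strict_mono r" "(z \<circ> r) \<longlonglongrightarrow> zs"
    using bounded_imp_convergent_subsequence[OF bounded_iterates[OF q]] by blast
  have zr: "(\<lambda>k. z (r k)) \<longlonglongrightarrow> zs" using r(2) by (simp add: o_def)
  have "(\<lambda>k. R (z (r k)) - R zs) \<longlonglongrightarrow> 0"
    by (rule Lim_null_comparison[OF _ tendsto_norm_zero[OF LIM_zero[OF zr]]]) (simp add: nonexpansive)
  then have "(\<lambda>k. R (z (r k)) - z (r k)) \<longlonglongrightarrow> R zs - zs"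
    using zr by (intro tendsto_intros) (simp_all add: LIM_zero_cancel)
  moreover have "(\<lambda>k. R (z (r k)) - z (r k)) \<longlonglongrightarrow> 0"
    using LIMSEQ_subseq_LIMSEQ[OF residual_tendsto_zero[OF q] r(1)]
    by (simp add: o_def residual_def tendsto_norm_zero_iff)
  ultimately have fixed: "R zs = zs" using LIMSEQ_unique by fastforce
  have "z \<longlonglongrightarrow> zs"
  proof (rule LIMSEQ_I)
    fix e :: real assume "e > 0"
    then obtain K where K: "norm (z (r K) - zs) < e" using LIMSEQ_D[OF r(2)] by fastforce
    have dec: "decseq (\<lambda>k. norm (z k - zs))"
      by (rule decseq_SucI) (rule dist_fixed_point_decreasing[OF fixed])
    have "norm (z n - zs) < e" if "r K \<le> n" for n using decseqD[OF dec that] K by linarith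
    then show "\<exists>N. \<forall>n\<ge>N. norm (z n - zs) < e" by blast
  qed
  with fixed show ?thesis using that by blast
qed

end

lemma Lin_subspace: "subspace (Lin C)"
  unfolding Lin_def by (rule subspace_span)

lemma Lin_translate_in_affine_hull:
  fixes C :: "'a::euclidean_space set"
  assumes gb: "gb \<in> C" and v: "v \<in> Lin C"
  shows "gb + v \<in> affine hull C"
proof -
  define T where "T = (\<lambda>x. - gb + x) ` (C - {gb})"
  have "{a - b |a b. a \<in> C \<and> b \<in> C} \<subseteq> span T"
  proof clarify
    fix a b assume ab: "a \<in> C" "b \<in> C"
    have mem: "- gb + x \<in> span T" if "x \<in> C" for x
    proof (cases "x = gb")
      case True then show ?thesis by (simp add: span_0)
    next
      case False then show ?thesis using that unfolding T_def by (intro span_base) auto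
    qed
    have "a - b = (- gb + a) - (- gb + b)" by simp
    then show "a - b \<in> span T" using mem[OF ab(1)] mem[OF ab(2)] by (metis span_diff)
  qed
  then have "Lin C \<subseteq> span T" unfolding Lin_def by (rule span_minimal) (rule subspace_span)
  then have "gb + v \<in> (\<lambda>x. gb + x) ` span T" using v by blast
  then show ?thesis using affine_hull_span2[OF gb] unfolding T_def by simp
qed

lemma rel_interior_Lin_ball:
  fixes C :: "'a::euclidean_space set"
  assumes gb: "gb \<in> rel_interior C"
  obtains c where "c > 0" "\<And>v. v \<in> Lin C \<Longrightarrow> norm v \<le> c \<Longrightarrow> gb + v \<in> C"
proof -
  obtain e where e: "e > 0" "ball gb e \<inter> affine hull C \<subseteq> C" "gb \<in> C"
    using gb unfolding mem_rel_interior_ball by blast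
  show ?thesis
  proof (rule that[of "e / 2"])
    show "e / 2 > 0" using e by simp
    fix v assume v: "v \<in> Lin C" "norm v \<le> e / 2"
    have "gb + v \<in> ball gb e" using v e by (simp add: dist_norm)
    moreover have "gb + v \<in> affine hull C" by (rule Lin_translate_in_affine_hull[OF e(3) v(1)])
    ultimately show "gb + v \<in> C" using e(2) by blast
  qed
qed

lemma linear_left_inverse_orthogonal_kernel:
  fixes D :: "'a::euclidean_space \<Rightarrow> 'b::euclidean_space"
  assumes D: "linear D" and V: "subspace V" and ker: "{h. D h = 0} = orthogonal_comp V"
  obtains g where "linear g" "range g \<subseteq> V" "\<And>x. x \<in> V \<Longrightarrow> g (D x) = x"
    "\<And>x. g (D x) = 0 \<Longrightarrow> D x = 0"
proof -
  have spV: "span V = V" using V by (simp add: span_eq_iff)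
  have kerV: "D h = 0 \<longleftrightarrow> h \<in> orthogonal_comp V" for h using ker by blast
  have "inj_on D (span V)"
  proof (rule inj_onI)
    fix a b assume ab: "a \<in> span V" "b \<in> span V" "D a = D b"
    then have "D (a - b) = 0" using D by (simp add: linear_diff)
    then have "a - b \<in> orthogonal_comp V" using kerV by blast
    moreover have "a - b \<in> V" using ab spV V by (simp add: subspace_diff)
    ultimately have "orthogonal (a - b) (a - b)" unfolding orthogonal_comp_def by blast
    then show "a = b" by (simp add: orthogonal_def)
  qed
  from linear_inj_on_left_inverse[OF D this] obtain g where
    g: "range g \<subseteq> V" "linear g" "\<And>x. x \<in> V \<Longrightarrow> g (D x) = x" using spV by auto
  have "D x = 0" if gx: "g (D x) = 0" for x
  proof -
    obtain x1 x2 where x: "x1 \<in> span V" "\<And>v. v \<in> span V \<Longrightarrow> orthogonal x2 v" "x = x1 + x2"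
      using orthogonal_subspace_decomp_exists by blast
    have "x2 \<in> orthogonal_comp V" using x(2) spV by (auto simp: orthogonal_comp_def orthogonal_commute)
    then have Dx: "D x = D x1" using x(3) kerV D by (simp add: linear_add)
    then have "x1 = 0" using gx g(3) x(1) spV by simp
    then show ?thesis using Dx D by (simp add: linear_0)
  qed
  then show ?thesis using that g by blast
qed

lemma brouwer_zero_in_subspace_ball:
  fixes f :: "'a::euclidean_space \<Rightarrow> 'a"
  assumes V: "subspace V" and r: "r \<ge> 0"
    and cont: "continuous_on (cball 0 r \<inter> V) f"
    and self: "\<And>n. n \<in> cball 0 r \<inter> V \<Longrightarrow> n - f n \<in> cball 0 r \<inter> V"
  obtains n where "n \<in> cball 0 r \<inter> V" "f n = 0"
proof -
  have "0 \<in> cball 0 r \<inter> V" using V r by (simp add: subspace_0)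
  moreover have "compact (cball 0 r \<inter> V)" "convex (cball 0 r \<inter> V)"
    using V by (simp_all add: compact_Int_closed closed_subspace convex_Int subspace_imp_convex)
  moreover have "continuous_on (cball 0 r \<inter> V) (\<lambda>n. n - f n)"
    by (intro continuous_intros cont)
  ultimately obtain n where "n \<in> cball 0 r \<inter> V" "n - f n = n"
    using brouwer[of "cball 0 r \<inter> V" "\<lambda>n. n - f n"] self by blast
  then show ?thesis using that by simp
qed

text \<open>
  The step n solves g (\<Phi> (y + n)) = 0 for a left inverse g on V
  of the derivative D of \<Phi> at x0; since \<Phi> (y + n) = D (y - x0) + D n + o(|y + n - x0|), the map
  n \<mapsto> n - g (\<Phi> (y + n)) sends the ball of radius C |y - x0| in V into itself, and Brouwer's
  theorem provides the zero.
\<close>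
lemma C2_manifold_normal_correction:
  fixes x0 :: "'a::euclidean_space" and V :: "'a set"
  assumes CM: "C2_manifold_tangent M x0 (orthogonal_comp V)" and V: "subspace V"
  obtains \<delta> C where "\<delta> > 0" "C \<ge> 0"
    "\<And>y. norm (y - x0) < \<delta> \<Longrightarrow> \<exists>n\<in>V. norm n \<le> C * norm (y - x0) \<and> y + n \<in> M"
proof -
  obtain U S and \<Phi> D :: "'a \<Rightarrow> 'a" where U: "open U" "x0 \<in> U" and S: "\<Phi> ` U \<subseteq> S"
    and C2: "C2_on U \<Phi>" and dD: "(\<Phi> has_derivative D) (at x0)" and rD: "range D = S"
    and MU: "M \<inter> U = {y \<in> U. \<Phi> y = 0}" and ker: "{h. D h = 0} = orthogonal_comp V"
    using CM unfolding C2_manifold_tangent_def by blast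
  have P0: "\<Phi> x0 = 0" using CM U MU unfolding C2_manifold_tangent_def by blast
  have linD: "linear D" using dD by (rule has_derivative_linear)
  have contU: "continuous_on U \<Phi>"
    using C2 unfolding C2_on_def
    by (metis continuous_at_imp_continuous_on has_derivative_continuous)
  obtain g where g: "linear g" "range g \<subseteq> V" "\<And>x. x \<in> V \<Longrightarrow> g (D x) = x"
    "\<And>x. g (D x) = 0 \<Longrightarrow> D x = 0"
    using linear_left_inverse_orthogonal_kernel[OF linD V ker] by blast
  obtain B where B: "B > 0" "\<And>x. norm (g x) \<le> B * norm x" using linear_bounded_pos[OF g(1)] by blast
  obtain BD where BD: "BD > 0" "\<And>x. norm (D x) \<le> BD * norm x" using linear_bounded_pos[OF linD] by blast
  define C where "C = 2 * (B * BD + 1)"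
  have C0: "C > 0" unfolding C_def using B BD by (simp add: add_pos_nonneg)
  obtain d where d: "d > 0"
    "\<And>w. norm (w - x0) < d \<Longrightarrow> norm (\<Phi> w - \<Phi> x0 - D (w - x0)) \<le> (1 / (4 * B)) * norm (w - x0)"
    using dD[unfolded has_derivative_at_alt] B(1) by (metis divide_pos_pos mult_pos_pos zero_less_numeral zero_less_one)
  obtain d2 where d2: "d2 > 0" "ball x0 d2 \<subseteq> U" using U openE by blast
  define \<delta> where "\<delta> = min d d2 / (C + 1)"
  have \<delta>0: "\<delta> > 0" unfolding \<delta>_def using d d2 C0 by simp
  show ?thesis
  proof (rule that[OF \<delta>0 less_imp_le[OF C0]])
    fix y assume y: "norm (y - x0) < \<delta>"
    define \<rho> where "\<rho> = norm (y - x0)"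
    define r where "r = C * \<rho>"
    define K where "K = cball 0 r \<inter> V"
    have r0: "r \<ge> 0" unfolding r_def \<rho>_def using C0 by simp
    have step: "norm (y + n - x0) \<le> \<rho> + r" if "n \<in> K" for n
      using that norm_triangle_ineq[of "y - x0" n] unfolding K_def \<rho>_def by (simp add: algebra_simps)
    have near: "norm (y + n - x0) < min d d2" if "n \<in> K" for n
    proof -
      have "\<rho> + r = (C + 1) * \<rho>" unfolding r_def by (simp add: algebra_simps)
      also have "\<dots> < (C + 1) * \<delta>" using y C0 unfolding \<rho>_def by simp
      also have "\<dots> = min d d2" unfolding \<delta>_def using C0 by simp
      finally show ?thesis using step[OF that] by linarith
    qed
    have inU: "y + n \<in> U" if "n \<in> K" for n
      using near[OF that] d2(2) by (auto simp: dist_norm norm_minus_commute)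
    have "continuous_on K (\<lambda>n. \<Phi> (y + n))"
      by (rule continuous_on_compose2[OF contU]) (auto intro!: continuous_intros inU)
    moreover have "continuous_on UNIV g" using g(1) by (simp add: linear_continuous_on linear_linear)
    ultimately have cont: "continuous_on K (\<lambda>n. g (\<Phi> (y + n)))"
      by (metis continuous_on_compose2 subset_UNIV)
    have self: "n - g (\<Phi> (y + n)) \<in> K" if n: "n \<in> K" for n
    proof -
      have nV: "n \<in> V" using n K_def by simp
      define Rm where "Rm = \<Phi> (y + n) - D (y + n - x0)"
      have Rm: "norm Rm \<le> (1 / (4 * B)) * norm (y + n - x0)"
        using d(2)[of "y + n"] near[OF n] P0 unfolding Rm_def by simp
      have "\<Phi> (y + n) = D (y - x0) + D n + Rm" unfolding Rm_def using linD
        by (simp add: linear_add[symmetric] algebra_simps)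
      then have fe: "n - g (\<Phi> (y + n)) = - (g (D (y - x0)) + g Rm)"
        using g(1) g(3)[OF nV] by (simp add: linear_add)
      have "norm (g (D (y - x0))) \<le> B * (BD * \<rho>)"
        using B(2)[of "D (y - x0)"] BD(2)[of "y - x0"] B(1) unfolding \<rho>_def
        by (meson mult_left_mono order_trans less_imp_le)
      moreover have "norm (g Rm) \<le> norm (y + n - x0) / 4"
        using B(2)[of Rm] mult_left_mono[OF Rm, of B] B(1) by simp
      moreover have "norm (n - g (\<Phi> (y + n))) \<le> norm (g (D (y - x0))) + norm (g Rm)"
        unfolding fe norm_minus_cancel by (rule norm_triangle_ineq)
      moreover have "norm (y + n - x0) / 4 \<le> (\<rho> + r) / 4" using step[OF n] by simp
      ultimately have "norm (n - g (\<Phi> (y + n))) \<le> B * (BD * \<rho>) + (\<rho> + r) / 4"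
        by linarith
      also have "\<dots> \<le> r"
      proof -
        have "0 \<le> B * BD * \<rho>" "0 \<le> \<rho>" using B BD unfolding \<rho>_def by simp_all
        then show ?thesis unfolding r_def C_def by (simp add: algebra_simps)
      qed
      finally show ?thesis using nV g(2) V unfolding K_def by (auto intro: subspace_diff)
    qed
    obtain n where n: "n \<in> K" "g (\<Phi> (y + n)) = 0"
      using brouwer_zero_in_subspace_ball[OF V r0 cont[unfolded K_def] self[unfolded K_def]]
      unfolding K_def .
    obtain w where "\<Phi> (y + n) = D w" using S rD inU[OF n(1)] by blast
    then have "\<Phi> (y + n) = 0" using g(4) n(2) by simp
    then have "y + n \<in> M" using MU inU[OF n(1)] by blast
    then show "\<exists>n\<in>V. norm n \<le> C * norm (y - x0) \<and> y + n \<in> M"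
      using n(1) unfolding K_def r_def \<rho>_def by auto
  qed
qed

lemma not_eventually_subseq:
  assumes "\<not> (\<forall>\<^sub>F k in sequentially. P k)" and "\<forall>\<^sub>F k in sequentially. Q k"
  obtains r :: "nat \<Rightarrow> nat" where "strict_mono r" "\<And>k. Q (r k)" "\<And>k. \<not> P (r k)"
proof -
  have "\<not> (\<forall>\<^sub>F k in sequentially. Q k \<longrightarrow> P k)" by (rule not_eventually_impI[OF assms(2,1)])
  then show ?thesis using not_eventually_sequentiallyD that by force
qed

lemma subspace_unit_directions_convergent_subseq:
  fixes d :: "nat \<Rightarrow> 'a::euclidean_space"
  assumes V: "subspace V" and d: "\<And>k. d k \<in> V" "\<And>k. d k \<noteq> 0"
  obtains s l where "strict_mono s" "l \<in> V" "norm l = 1"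
    "(\<lambda>k. (1 / norm (d (s k))) *\<^sub>R d (s k)) \<longlonglongrightarrow> l"
proof -
  define u where "u k = (1 / norm (d k)) *\<^sub>R d k" for k
  have "u k \<in> sphere 0 1 \<inter> V" for k using d V unfolding u_def by (auto simp: subspace_scale)
  moreover have "compact (sphere (0::'a) 1 \<inter> V)" using V by (simp add: compact_Int_closed closed_subspace)
  ultimately obtain l s where "l \<in> sphere 0 1 \<inter> V" "strict_mono s" "(u \<circ> s) \<longlonglongrightarrow> l"
    using compact_imp_seq_compact seq_compactE by metis
  then show ?thesis using that unfolding u_def o_def by auto
qed

lemma C2_manifold_sequence_correction:
  fixes x0 :: "'a::euclidean_space"
  assumes CM: "C2_manifold_tangent M x0 (orthogonal_comp V)" and V: "subspace V" and y: "y \<longlonglongrightarrow> x0"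
  obtains p where "\<And>k. p k \<in> M" "p \<longlonglongrightarrow> x0" "\<forall>\<^sub>F k in sequentially. y k - p k \<in> V"
proof -
  obtain \<delta> C where dC: "\<delta> > 0" "C \<ge> 0"
    "\<And>y. norm (y - x0) < \<delta> \<Longrightarrow> \<exists>n\<in>V. norm n \<le> C * norm (y - x0) \<and> y + n \<in> M"
    using C2_manifold_normal_correction[OF CM V] by blast
  define n where "n k = (SOME n. n \<in> V \<and> norm n \<le> C * norm (y k - x0) \<and> y k + n \<in> M)" for k
  have n: "n k \<in> V \<and> norm (n k) \<le> C * norm (y k - x0) \<and> y k + n k \<in> M" if "norm (y k - x0) < \<delta>" for k
    unfolding n_def by (rule someI_ex) (use dC(3)[OF that] in blast)
  define p where "p k = (if norm (y k - x0) < \<delta> then y k + n k else x0)" for k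
  have x0M: "x0 \<in> M" using CM unfolding C2_manifold_tangent_def by blast
  have close: "\<forall>\<^sub>F k in sequentially. norm (y k - x0) < \<delta>"
    using tendstoD[OF y dC(1)] by (simp add: dist_norm)
  have "\<forall>\<^sub>F k in sequentially. norm (p k - x0) \<le> (1 + C) * norm (y k - x0)"
  proof (rule eventually_mono[OF close])
    fix k assume k: "norm (y k - x0) < \<delta>"
    then have "norm (p k - x0) \<le> norm (y k - x0) + norm (n k)"
      unfolding p_def by (simp add: norm_triangle_ineq[of "y k - x0" "n k", simplified algebra_simps] algebra_simps)
    then show "norm (p k - x0) \<le> (1 + C) * norm (y k - x0)" using n[OF k] by (simp add: algebra_simps)
  qed
  moreover have "(\<lambda>k. (1 + C) * norm (y k - x0)) \<longlonglongrightarrow> 0"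
    using tendsto_mult_right_zero[OF tendsto_norm_zero[OF LIM_zero[OF y]]] .
  ultimately have "p \<longlonglongrightarrow> x0" by (rule Lim_null_comparison[THEN LIM_zero_cancel])
  moreover have "\<forall>\<^sub>F k in sequentially. y k - p k \<in> V"
    using close by eventually_elim (use n V in \<open>simp add: p_def subspace_neg\<close>)
  moreover have "p k \<in> M" for k using n x0M unfolding p_def by auto
  ultimately show ?thesis using that by blast
qed

lemma subdiff_continuous_rel_approx:
  assumes "subdiff_continuous_rel F x M" "\<And>k. y k \<in> M" "y \<longlonglongrightarrow> x" "g0 \<in> subdiff F x"
  obtains g where "\<forall>\<^sub>F k in sequentially. g k \<in> subdiff F (y k)" "g \<longlonglongrightarrow> g0"
  using assms unfolding subdiff_continuous_rel_def by blast

text \<open>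
  If y k \<notin> M infinitely often, correct y k to p k \<in> M with d k = y k - p k \<in> Lin \<partial>F(x0), and let l
  be a limit direction of d k. As g0 \<in> ri \<partial>F(x0), also g0 + c l \<in> \<partial>F(x0), which continuity of \<partial>F
  along M approximates by h k \<in> \<partial>F(p k). Monotonicity gives (h k - g k) \<bullet> d k \<le> 0, whereas
  (h k - g k) \<bullet> d k / |d k| tends to c > 0.
\<close>
theorem partly_smooth_identification:
  fixes F :: "'a::euclidean_space \<Rightarrow> ereal"
  assumes F: "Gamma0 F" and ps: "partly_smooth F x0 M"
    and g0: "g0 \<in> rel_interior (subdiff F x0)"
    and y: "y \<longlonglongrightarrow> x0" and g: "g \<longlonglongrightarrow> g0" and gsub: "\<forall>\<^sub>F k in sequentially. g k \<in> subdiff F (y k)"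
  shows "\<forall>\<^sub>F k in sequentially. y k \<in> M"
proof (rule ccontr)
  assume nev: "\<not> (\<forall>\<^sub>F k in sequentially. y k \<in> M)"
  define V where "V = Lin (subdiff F x0)"
  have V: "subspace V" unfolding V_def by (rule Lin_subspace)
  have CM: "C2_manifold_tangent M x0 (orthogonal_comp V)" and cont: "subdiff_continuous_rel F x0 M"
    using ps unfolding partly_smooth_def Tsp_def V_def by blast+
  obtain p where p: "\<And>k. p k \<in> M" "p \<longlonglongrightarrow> x0" "\<forall>\<^sub>F k in sequentially. y k - p k \<in> V"
    using C2_manifold_sequence_correction[OF CM V y] by blast
  obtain r :: "nat \<Rightarrow> nat" where r: "strict_mono r"
    "\<And>k. g (r k) \<in> subdiff F (y (r k)) \<and> y (r k) - p (r k) \<in> V" "\<And>k. y (r k) \<notin> M"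
    using not_eventually_subseq[OF nev eventually_conj[OF gsub p(3)]] by blast
  define d where "d k = y (r k) - p (r k)" for k
  have dV: "d k \<in> V" and dnz: "d k \<noteq> 0" for k
    using r(2,3)[of k] p(1)[of "r k"] unfolding d_def by auto
  obtain s l where s: "strict_mono s" "l \<in> V" "norm l = 1"
    and u: "(\<lambda>k. (1 / norm (d (s k))) *\<^sub>R d (s k)) \<longlonglongrightarrow> l"
    by (rule subspace_unit_directions_convergent_subseq[OF V dV dnz])
  obtain c where c: "c > 0" "\<And>v. v \<in> V \<Longrightarrow> norm v \<le> c \<Longrightarrow> g0 + v \<in> subdiff F x0"
    using rel_interior_Lin_ball[OF g0] unfolding V_def by blast
  have shifted: "g0 + c *\<^sub>R l \<in> subdiff F x0"
    by (rule c(2)) (use c(1) s(2,3) V in \<open>simp_all add: subspace_scale\<close>)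
  have rs: "strict_mono (r \<circ> s)" using r(1) s(1) by (rule strict_mono_o)
  have pM: "\<And>k. p (r (s k)) \<in> M" using p(1) by blast
  have "(\<lambda>k. p (r (s k))) \<longlonglongrightarrow> x0" using LIMSEQ_subseq_LIMSEQ[OF p(2) rs] by (simp add: o_def)
  then obtain h where h: "\<forall>\<^sub>F k in sequentially. h k \<in> subdiff F (p (r (s k)))"
    "h \<longlonglongrightarrow> g0 + c *\<^sub>R l"
    by (rule subdiff_continuous_rel_approx[OF cont pM _ shifted])
  have "(\<lambda>k. g (r (s k))) \<longlonglongrightarrow> g0" using LIMSEQ_subseq_LIMSEQ[OF g rs] by (simp add: o_def)
  then have "(\<lambda>k. (h k - g (r (s k))) \<bullet> ((1 / norm (d (s k))) *\<^sub>R d (s k))) \<longlonglongrightarrow> ((g0 + c *\<^sub>R l) - g0) \<bullet> l"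
    by (intro tendsto_intros h(2) u)
  moreover have "((g0 + c *\<^sub>R l) - g0) \<bullet> l = c" using s(3) by (simp add: dot_square_norm)
  ultimately have "\<forall>\<^sub>F k in sequentially. (h k - g (r (s k))) \<bullet> ((1 / norm (d (s k))) *\<^sub>R d (s k)) > 0"
    using c(1) by (simp add: order_tendstoD(1))
  moreover have "\<forall>\<^sub>F k in sequentially. (h k - g (r (s k))) \<bullet> ((1 / norm (d (s k))) *\<^sub>R d (s k)) \<le> 0"
  proof (rule eventually_mono[OF h(1)])
    fix k assume "h k \<in> subdiff F (p (r (s k)))"
    from subdiff_monotone[OF F this r(2)[of "s k", THEN conjunct1]]
    have "(h k - g (r (s k))) \<bullet> d (s k) \<le> 0"
      unfolding d_def by (simp add: inner_diff_right inner_diff_left)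
    then show "(h k - g (r (s k))) \<bullet> ((1 / norm (d (s k))) *\<^sub>R d (s k)) \<le> 0"
      by (simp add: divide_nonpos_nonneg)
  qed
  ultimately have "\<forall>\<^sub>F k in sequentially. False" by eventually_elim simp
  then show False by simp
qed

lemma subgradient_eq_derivative_along_line:
  fixes f :: "'a::euclidean_space \<Rightarrow> real"
  assumes g: "g \<in> subdiff F y" and f: "(f has_derivative Df) (at y)" and \<delta>: "\<delta> > 0"
    and line: "\<And>t. \<bar>t\<bar> < \<delta> \<Longrightarrow> F (y + t *\<^sub>R h) = ereal (f (y + t *\<^sub>R h))"
  shows "g \<bullet> h = Df h"
proof -
  define \<phi> where "\<phi> t = f (y + t *\<^sub>R h) - t * (g \<bullet> h)" for t
  have lin: "linear Df" using f by (rule has_derivative_linear)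
  have "((\<lambda>t. y + t *\<^sub>R h) has_derivative (\<lambda>t. t *\<^sub>R h)) (at 0)"
    by (auto intro!: derivative_eq_intros)
  from has_derivative_compose[OF this] f
  have "((\<lambda>t. f (y + t *\<^sub>R h)) has_derivative (\<lambda>t. Df (t *\<^sub>R h))) (at 0)" by simp
  then have "(\<phi> has_derivative (\<lambda>t. (Df h - g \<bullet> h) * t)) (at 0)"
    unfolding \<phi>_def using linear_scale[OF lin]
    by (auto intro!: derivative_eq_intros simp: algebra_simps)
  then have "DERIV \<phi> 0 :> Df h - g \<bullet> h" by (simp add: has_field_derivative_def)
  moreover have "\<phi> 0 \<le> \<phi> t" if "\<bar>0 - t\<bar> < \<delta>" for t
  proof -
    have "F y = ereal (f y)" using line[of 0] \<delta> by simp
    moreover have "F (y + t *\<^sub>R h) = ereal (f (y + t *\<^sub>R h))" using line that by simp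
    ultimately have "f y + g \<bullet> ((y + t *\<^sub>R h) - y) \<le> f (y + t *\<^sub>R h)" by (rule subdiff_ineq[OF g])
    then show ?thesis unfolding \<phi>_def by simp
  qed
  ultimately have "Df h - g \<bullet> h = 0" using DERIV_local_min[OF _ \<delta>] by blast
  then show ?thesis by simp
qed

lemma partly_smooth_affine_tangent_subset:
  fixes F :: "'a::euclidean_space \<Rightarrow> ereal"
  assumes ps: "partly_smooth F x0 M" and M: "M = (+) x0 ` Tsp F x0"
  obtains U where "open U" "x0 \<in> U" "\<And>y. y \<in> M \<Longrightarrow> y \<in> U \<Longrightarrow> Tsp F x0 \<subseteq> Tsp F y"
proof -
  define T where "T = Tsp F x0"
  have T: "subspace T" unfolding T_def Tsp_def by (rule subspace_orthogonal_comp)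
  obtain U and f :: "'a \<Rightarrow> real" where U: "open U" "x0 \<in> U"
    and f: "C2_on U f" "\<And>y. y \<in> M \<inter> U \<Longrightarrow> F y = ereal (f y)"
    using ps unfolding partly_smooth_def by blast
  obtain Df :: "'a \<Rightarrow> 'a \<Rightarrow>\<^sub>L real" where Df: "\<And>y. y \<in> U \<Longrightarrow> (f has_derivative blinfun_apply (Df y)) (at y)"
    using f(1) unfolding C2_on_def by blast
  have "T \<subseteq> Tsp F y" if y: "y \<in> M" "y \<in> U" for y
  proof
    fix h assume h: "h \<in> T"
    obtain \<delta> where \<delta>: "\<delta> > 0" "ball y \<delta> \<subseteq> U" using U(1) y(2) openE by blast
    obtain \<tau> where \<tau>: "\<tau> \<in> T" "y = x0 + \<tau>" using y(1) M unfolding T_def by blast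
    have line: "F (y + t *\<^sub>R h) = ereal (f (y + t *\<^sub>R h))" if t: "\<bar>t\<bar> < \<delta> / (norm h + 1)" for t
    proof (rule f(2), rule IntI)
      have "\<tau> + t *\<^sub>R h \<in> T" using \<tau>(1) h T by (simp add: subspace_add subspace_scale)
      then show "y + t *\<^sub>R h \<in> M" unfolding M T_def[symmetric] \<tau>(2) by (auto simp: add.assoc)
      have "\<bar>t\<bar> * norm h \<le> \<bar>t\<bar> * (norm h + 1)" by (simp add: mult_left_mono)
      also have "\<dots> < \<delta>"
        using t pos_less_divide_eq[of "norm h + 1" "\<bar>t\<bar>" \<delta>] norm_ge_zero[of h] by linarith
      finally show "y + t *\<^sub>R h \<in> U" using \<delta>(2) by (auto simp: dist_norm)
    qed
    have "norm h + 1 > 0" using norm_ge_zero[of h] by linarith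
    then have "\<delta> / (norm h + 1) > 0" using \<delta>(1) by simp
    then have "a \<bullet> h = Df y h" if "a \<in> subdiff F y" for a
      using subgradient_eq_derivative_along_line[OF that Df[OF y(2)], of "\<delta> / (norm h + 1)"] line by blast
    then have "orthogonal h w" if "w \<in> {a - b |a b. a \<in> subdiff F y \<and> b \<in> subdiff F y}" for w
      using that by (auto simp: orthogonal_def inner_diff_right inner_commute)
    then have "orthogonal h w" if "w \<in> Lin (subdiff F y)" for w
      using orthogonal_to_span[OF that[unfolded Lin_def]] by blast
    then show "h \<in> Tsp F y" unfolding Tsp_def orthogonal_comp_def by (simp add: orthogonal_commute)
  qed
  then show ?thesis using that U unfolding T_def by blast
qed

text \<open>
  A unit vector of Lin \<partial>F(x0) pairs nontrivially with some difference of subgradients at x0; by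
  continuity such differences are limits of differences of subgradients at y k, which are
  orthogonal to Tsp F (y k).
\<close>
lemma subdiff_continuous_rel_Tsp_inter_Lin:
  fixes F :: "'a::euclidean_space \<Rightarrow> ereal"
  assumes cont: "subdiff_continuous_rel F x0 M" and y: "y \<longlonglongrightarrow> x0"
    and yM: "\<forall>\<^sub>F k in sequentially. y k \<in> M"
  shows "\<forall>\<^sub>F k in sequentially. Tsp F (y k) \<inter> Lin (subdiff F x0) \<subseteq> {0}"
proof (rule ccontr)
  assume nev: "\<not> ?thesis"
  define V where "V = Lin (subdiff F x0)"
  have V: "subspace V" unfolding V_def by (rule Lin_subspace)
  obtain r :: "nat \<Rightarrow> nat" where r: "strict_mono r" "\<And>k. y (r k) \<in> M"
    "\<And>k. \<not> Tsp F (y (r k)) \<inter> V \<subseteq> {0}"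
    using not_eventually_subseq[OF nev yM] unfolding V_def by blast
  have "\<exists>a. a \<in> Tsp F (y (r k)) \<and> a \<in> V \<and> a \<noteq> 0" for k using r(3)[of k] by blast
  then obtain a where a: "\<And>k. a k \<in> Tsp F (y (r k))" "\<And>k. a k \<in> V" "\<And>k. a k \<noteq> 0"
    by metis
  obtain s l where s: "strict_mono s" "l \<in> V" "norm l = 1"
    and u: "(\<lambda>k. (1 / norm (a (s k))) *\<^sub>R a (s k)) \<longlonglongrightarrow> l"
    by (rule subspace_unit_directions_convergent_subseq[OF V a(2,3)])
  obtain a0 b0 where ab0: "a0 \<in> subdiff F x0" "b0 \<in> subdiff F x0" "(a0 - b0) \<bullet> l \<noteq> 0"
  proof -
    have "\<not> (\<forall>w \<in> {a - b |a b. a \<in> subdiff F x0 \<and> b \<in> subdiff F x0}. orthogonal l w)"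
    proof
      assume "\<forall>w \<in> {a - b |a b. a \<in> subdiff F x0 \<and> b \<in> subdiff F x0}. orthogonal l w"
      then have "orthogonal l l" using orthogonal_to_span[OF s(2)[unfolded V_def Lin_def]] by blast
      then show False using s(3) by (simp add: orthogonal_def)
    qed
    then show ?thesis using that by (auto simp: orthogonal_def inner_commute)
  qed
  define q where "q k = y (r (s k))" for k
  have qM: "\<And>k. q k \<in> M" unfolding q_def using r(2) by blast
  have rs: "strict_mono (r \<circ> s)" using r(1) s(1) by (rule strict_mono_o)
  have qlim: "q \<longlonglongrightarrow> x0" using LIMSEQ_subseq_LIMSEQ[OF y rs] unfolding q_def by (simp add: o_def)
  obtain ha where ha: "\<forall>\<^sub>F k in sequentially. ha k \<in> subdiff F (q k)" "ha \<longlonglongrightarrow> a0"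
    by (rule subdiff_continuous_rel_approx[OF cont qM qlim ab0(1)])
  obtain hb where hb: "\<forall>\<^sub>F k in sequentially. hb k \<in> subdiff F (q k)" "hb \<longlonglongrightarrow> b0"
    by (rule subdiff_continuous_rel_approx[OF cont qM qlim ab0(2)])
  have "(\<lambda>k. (ha k - hb k) \<bullet> ((1 / norm (a (s k))) *\<^sub>R a (s k))) \<longlonglongrightarrow> (a0 - b0) \<bullet> l"
    by (intro tendsto_intros ha(2) hb(2) u)
  moreover have "\<forall>\<^sub>F k in sequentially. (ha k - hb k) \<bullet> ((1 / norm (a (s k))) *\<^sub>R a (s k)) = 0"
    using ha(1) hb(1)
  proof eventually_elim
    case (elim k)
    then have "ha k - hb k \<in> Lin (subdiff F (q k))" unfolding Lin_def by (intro span_base) blast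
    moreover have "(1 / norm (a (s k))) *\<^sub>R a (s k) \<in> Tsp F (q k)"
      using a(1)[of "s k"] unfolding q_def Tsp_def by (simp add: subspace_scale[OF subspace_orthogonal_comp])
    ultimately show ?case unfolding Tsp_def orthogonal_comp_def orthogonal_def by blast
  qed
  then have "(\<lambda>k. (ha k - hb k) \<bullet> ((1 / norm (a (s k))) *\<^sub>R a (s k))) \<longlonglongrightarrow> 0"
    by (rule tendsto_eventually)
  ultimately have "(a0 - b0) \<bullet> l = 0" by (rule LIMSEQ_unique)
  with ab0(3) show False by simp
qed

lemma subspace_eq_orthogonal_comp:
  fixes S V :: "'a::euclidean_space set"
  assumes S: "subspace S" and V: "subspace V"
    and sub: "orthogonal_comp V \<subseteq> S" and inter: "S \<inter> V \<subseteq> {0}"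
  shows "S = orthogonal_comp V"
proof
  have spV: "span V = V" using V by (simp add: span_eq_iff)
  show "S \<subseteq> orthogonal_comp V"
  proof
    fix w assume w: "w \<in> S"
    obtain a b where ab: "a \<in> span V" "\<And>v. v \<in> span V \<Longrightarrow> orthogonal b v" "w = a + b"
      using orthogonal_subspace_decomp_exists by blast
    have b: "b \<in> orthogonal_comp V" using ab(2) spV by (auto simp: orthogonal_comp_def orthogonal_commute)
    then have "a \<in> S" using w ab(3) S sub by (metis add_diff_cancel_right' subsetD subspace_diff)
    then have "a = 0" using ab(1) spV inter by blast
    then show "w \<in> orthogonal_comp V" using ab(3) b by simp
  qed
qed (rule sub)

theorem partly_smooth_affine_Tsp_eventually:
  fixes F :: "'a::euclidean_space \<Rightarrow> ereal"
  assumes ps: "partly_smooth F x0 M" and M: "M = (+) x0 ` Tsp F x0"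
    and y: "y \<longlonglongrightarrow> x0" and yM: "\<forall>\<^sub>F k in sequentially. y k \<in> M"
  shows "\<forall>\<^sub>F k in sequentially. Tsp F (y k) = Tsp F x0"
proof -
  obtain U where U: "open U" "x0 \<in> U" "\<And>y. y \<in> M \<Longrightarrow> y \<in> U \<Longrightarrow> Tsp F x0 \<subseteq> Tsp F y"
    using partly_smooth_affine_tangent_subset[OF ps M] by blast
  have "\<forall>\<^sub>F k in sequentially. y k \<in> U" by (rule topological_tendstoD[OF y U(1,2)])
  moreover have "\<forall>\<^sub>F k in sequentially. Tsp F (y k) \<inter> Lin (subdiff F x0) \<subseteq> {0}"
    using ps y yM unfolding partly_smooth_def by (blast intro: subdiff_continuous_rel_Tsp_inter_Lin)
  ultimately show ?thesis using yM
  proof eventually_elim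
    case (elim k)
    then show ?case
      using subspace_eq_orthogonal_comp[OF _ Lin_subspace, of "Tsp F (y k)"] U(3)[of "y k"]
      by (simp add: Tsp_def subspace_orthogonal_comp)
  qed
qed

lemma rprox_fixed_point_of_opposite_subgradients:
  fixes J G :: "'a::euclidean_space \<Rightarrow> ereal"
  assumes J: "Gamma0 J" and G: "Gamma0 G" and gamma: "\<gamma> > 0"
    and u: "u \<in> subdiff J m" "- u \<in> subdiff G m"
  shows "rprox \<gamma> G (rprox \<gamma> J (m + \<gamma> *\<^sub>R u)) = m + \<gamma> *\<^sub>R u"
proof -
  have "prox \<gamma> J (m + \<gamma> *\<^sub>R u) = m" by (rule prox_eqI[OF J gamma]) (use u(1) gamma in simp)
  then have rJ: "rprox \<gamma> J (m + \<gamma> *\<^sub>R u) = m - \<gamma> *\<^sub>R u" by (simp add: rprox_def algebra_simps scaleR_2)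
  have pG: "prox \<gamma> G (m - \<gamma> *\<^sub>R u) = m" by (rule prox_eqI[OF G gamma]) (use u(2) gamma in simp)
  show ?thesis unfolding rJ unfolding rprox_def pG by (simp add: algebra_simps scaleR_2)
qed

lemma rprox_fixed_point_subgradients:
  fixes J G :: "'a::euclidean_space \<Rightarrow> ereal"
  assumes J: "Gamma0 J" and G: "Gamma0 G" and gamma: "\<gamma> > 0"
    and fixed: "rprox \<gamma> G (rprox \<gamma> J zs) = zs"
  defines "xs \<equiv> prox \<gamma> J zs"
  shows "prox \<gamma> G (2 *\<^sub>R xs - zs) = xs"
    and "(1 / \<gamma>) *\<^sub>R (zs - xs) \<in> subdiff J xs"
    and "- ((1 / \<gamma>) *\<^sub>R (zs - xs)) \<in> subdiff G xs"
proof -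
  have "rprox \<gamma> G (rprox \<gamma> J zs) = 2 *\<^sub>R prox \<gamma> G (2 *\<^sub>R xs - zs) - (2 *\<^sub>R xs - zs)"
    unfolding rprox_def xs_def ..
  then show vs: "prox \<gamma> G (2 *\<^sub>R xs - zs) = xs" using fixed by (simp add: algebra_simps)
  show "(1 / \<gamma>) *\<^sub>R (zs - xs) \<in> subdiff J xs" unfolding xs_def by (rule prox_subgradient[OF J gamma])
  have "(1 / \<gamma>) *\<^sub>R ((2 *\<^sub>R xs - zs) - xs) \<in> subdiff G xs"
    using prox_subgradient[OF G gamma, of "2 *\<^sub>R xs - zs"] unfolding vs .
  then show "- ((1 / \<gamma>) *\<^sub>R (zs - xs)) \<in> subdiff G xs" by (simp add: scaleR_2 algebra_simps)
qed

lemma rel_interior_uminus_image: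
  fixes S :: "'a::euclidean_space set"
  shows "rel_interior (uminus ` S) = uminus ` rel_interior S"
  by (rule rel_interior_injective_linear_image)
    (auto intro: bounded_linear_minus[OF bounded_linear_ident] simp: inj_def)

locale douglas_rachford =
  fixes J G :: "'a::euclidean_space \<Rightarrow> ereal" and \<gamma> :: real and lam :: "nat \<Rightarrow> real"
    and z x v :: "nat \<Rightarrow> 'a"
  assumes J: "Gamma0 J" and G: "Gamma0 G" and gamma: "\<gamma> > 0"
    and lam: "\<And>k. lam k \<in> {0<..2}"
    and lam_sum: "filterlim (\<lambda>n. \<Sum>k<n. lam k * (2 - lam k)) at_top sequentially"
    and x_eq: "\<And>k. x k = prox \<gamma> J (z k)"
    and v_eq: "\<And>k. v (Suc k) = prox \<gamma> G (2 *\<^sub>R x k - z k)"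
    and z_eq: "\<And>k. z (Suc k) = (1 - lam k) *\<^sub>R z k + lam k *\<^sub>R (z k + v (Suc k) - x k)"
begin

text \<open>R (z k) - z k = 2 (v (Suc k) - x k), so the relaxation lam k becomes the step lam k / 2.\<close>
lemma krasnoselskii_mann: "krasnoselskii_mann (\<lambda>w. rprox \<gamma> G (rprox \<gamma> J w)) (\<lambda>k. lam k / 2) z"
proof
  show "norm (rprox \<gamma> G (rprox \<gamma> J a) - rprox \<gamma> G (rprox \<gamma> J b)) \<le> norm (a - b)" for a b
    using rprox_nonexpansive[OF G gamma] rprox_nonexpansive[OF J gamma] by (meson order_trans)
  show "0 < lam k / 2" "lam k / 2 \<le> 1" for k using lam[of k] by auto
  have "filterlim (\<lambda>n. (1/4) * (\<Sum>k<n. lam k * (2 - lam k))) at_top sequentially"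
    by (rule filterlim_tendsto_pos_mult_at_top[OF tendsto_const _ lam_sum]) simp
  moreover have "(\<lambda>n. (1/4) * (\<Sum>k<n. lam k * (2 - lam k))) = (\<lambda>n. \<Sum>k<n. lam k / 2 * (1 - lam k / 2))"
    by (simp add: sum_distrib_left algebra_simps)
  ultimately show "filterlim (\<lambda>n. \<Sum>k<n. lam k / 2 * (1 - lam k / 2)) at_top sequentially" by simp
  fix k
  have "rprox \<gamma> G (rprox \<gamma> J (z k)) - z k = 2 *\<^sub>R (v (Suc k) - x k)"
    unfolding rprox_def x_eq v_eq by (simp add: algebra_simps)
  then have "(lam k / 2) *\<^sub>R (rprox \<gamma> G (rprox \<gamma> J (z k)) - z k) = lam k *\<^sub>R (v (Suc k) - x k)"
    by simp
  then show "z (Suc k) = z k + (lam k / 2) *\<^sub>R (rprox \<gamma> G (rprox \<gamma> J (z k)) - z k)"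
    unfolding z_eq by (simp add: algebra_simps)
qed

lemma z_converges:
  assumes "rprox \<gamma> G (rprox \<gamma> J p) = p"
  obtains zs where "z \<longlonglongrightarrow> zs" "rprox \<gamma> G (rprox \<gamma> J zs) = zs"
  using krasnoselskii_mann.converges_to_fixed_point[OF krasnoselskii_mann assms] by blast

lemma x_converges:
  assumes "z \<longlonglongrightarrow> zs"
  shows "x \<longlonglongrightarrow> prox \<gamma> J zs"
proof -
  have "(\<lambda>k. x k - prox \<gamma> J zs) \<longlonglongrightarrow> 0"
    by (rule Lim_null_comparison[OF _ tendsto_norm_zero[OF LIM_zero[OF assms]]])
      (simp add: x_eq prox_nonexpansive[OF J gamma])
  then show ?thesis by (rule LIM_zero_cancel)
qed

lemma v_converges:
  assumes zs: "z \<longlonglongrightarrow> zs" "rprox \<gamma> G (rprox \<gamma> J zs) = zs"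
  shows "v \<longlonglongrightarrow> prox \<gamma> J zs"
proof -
  define xs where "xs = prox \<gamma> J zs"
  have "(\<lambda>k. 2 *\<^sub>R x k - z k) \<longlonglongrightarrow> 2 *\<^sub>R xs - zs"
    using x_converges[OF zs(1)] zs(1) unfolding xs_def by (intro tendsto_intros)
  then have "(\<lambda>k. norm ((2 *\<^sub>R x k - z k) - (2 *\<^sub>R xs - zs))) \<longlonglongrightarrow> 0"
    by (intro tendsto_norm_zero LIM_zero)
  then have "(\<lambda>k. v (Suc k) - prox \<gamma> G (2 *\<^sub>R xs - zs)) \<longlonglongrightarrow> 0"
    by (rule Lim_null_comparison[rotated]) (simp add: v_eq prox_nonexpansive[OF G gamma])
  then have "(\<lambda>k. v (Suc k)) \<longlonglongrightarrow> xs"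
    using rprox_fixed_point_subgradients(1)[OF J G gamma zs(2)] unfolding xs_def
    by (simp add: LIM_zero_cancel)
  then show ?thesis unfolding xs_def by (simp add: filterlim_sequentially_Suc)
qed

lemma x_subgradient: "(1 / \<gamma>) *\<^sub>R (z k - x k) \<in> subdiff J (x k)"
  unfolding x_eq by (rule prox_subgradient[OF J gamma])

lemma v_subgradient: "(1 / \<gamma>) *\<^sub>R ((2 *\<^sub>R x k - z k) - v (Suc k)) \<in> subdiff G (v (Suc k))"
  unfolding v_eq by (rule prox_subgradient[OF G gamma])

lemma finite_identification:
  assumes zs: "z \<longlonglongrightarrow> zs" "rprox \<gamma> G (rprox \<gamma> J zs) = zs" and xs: "xs = prox \<gamma> J zs"
    and psJ: "partly_smooth J xs MJ" and psG: "partly_smooth G xs MG"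
    and nondeg: "zs \<in> (\<lambda>u. xs + \<gamma> *\<^sub>R u) ` (rel_interior (subdiff J xs) \<inter> rel_interior (uminus ` subdiff G xs))"
  shows "(\<forall>\<^sub>F k in sequentially. x k \<in> MJ \<and> v k \<in> MG) \<and>
    (MG = (+) xs ` Tsp G xs \<longrightarrow>
       (\<forall>\<^sub>F k in sequentially. v k \<in> (+) xs ` Tsp G xs \<and> Tsp G (v k) = Tsp G xs)) \<and>
    (MJ = (+) xs ` Tsp J xs \<longrightarrow>
       (\<forall>\<^sub>F k in sequentially. x k \<in> (+) xs ` Tsp J xs \<and> Tsp J (x k) = Tsp J xs))"
proof -
  define w where "w = (1 / \<gamma>) *\<^sub>R (zs - xs)"
  obtain w' where w': "zs = xs + \<gamma> *\<^sub>R w'" "w' \<in> rel_interior (subdiff J xs)"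
    "w' \<in> uminus ` rel_interior (subdiff G xs)"
    using nondeg unfolding rel_interior_uminus_image by blast
  have "w' = w" unfolding w_def w'(1) using gamma by simp
  then have riJ: "w \<in> rel_interior (subdiff J xs)" and riG: "- w \<in> rel_interior (subdiff G xs)"
    using w'(2,3) by force+
  have xlim: "x \<longlonglongrightarrow> xs" and vlim: "v \<longlonglongrightarrow> xs"
    using x_converges[OF zs(1)] v_converges[OF zs] unfolding xs by blast+
  then have vSuc: "(\<lambda>k. v (Suc k)) \<longlonglongrightarrow> xs" by (simp add: filterlim_sequentially_Suc)
  have evJ: "\<forall>\<^sub>F k in sequentially. x k \<in> MJ"
  proof (rule partly_smooth_identification[OF J psJ riJ xlim])
    show "(\<lambda>k. (1 / \<gamma>) *\<^sub>R (z k - x k)) \<longlonglongrightarrow> w" unfolding w_def by (intro tendsto_intros zs(1) xlim)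
  qed (simp add: x_subgradient)
  have "\<forall>\<^sub>F k in sequentially. v (Suc k) \<in> MG"
  proof (rule partly_smooth_identification[OF G psG riG vSuc])
    have "(\<lambda>k. (1 / \<gamma>) *\<^sub>R ((2 *\<^sub>R x k - z k) - v (Suc k))) \<longlonglongrightarrow> (1 / \<gamma>) *\<^sub>R ((2 *\<^sub>R xs - zs) - xs)"
      by (intro tendsto_intros zs(1) xlim vSuc)
    then show "(\<lambda>k. (1 / \<gamma>) *\<^sub>R ((2 *\<^sub>R x k - z k) - v (Suc k))) \<longlonglongrightarrow> - w"
      unfolding w_def by (simp add: scaleR_2 algebra_simps)
  qed (simp add: v_subgradient)
  then have evG: "\<forall>\<^sub>F k in sequentially. v k \<in> MG" by (rule eventually_sequentially_Suc[THEN iffD1])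
  have "\<forall>\<^sub>F k in sequentially. v k \<in> (+) xs ` Tsp G xs \<and> Tsp G (v k) = Tsp G xs"
    if "MG = (+) xs ` Tsp G xs"
    using evG partly_smooth_affine_Tsp_eventually[OF psG that vlim evG] that
    by (simp add: eventually_conj_iff)
  moreover have "\<forall>\<^sub>F k in sequentially. x k \<in> (+) xs ` Tsp J xs \<and> Tsp J (x k) = Tsp J xs"
    if "MJ = (+) xs ` Tsp J xs"
    using evJ partly_smooth_affine_Tsp_eventually[OF psJ that xlim evJ] that
    by (simp add: eventually_conj_iff)
  ultimately show ?thesis using eventually_conj[OF evJ evG] by blast
qed

end

theorem theorem3p1:
  fixes J G :: "'a::euclidean_space \<Rightarrow> ereal"
    and \<gamma> :: real and lam :: "nat \<Rightarrow> real"
    and z x v :: "nat \<Rightarrow> 'a"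
  assumes J: "Gamma0 J" and G: "Gamma0 G"
    and ri: "rel_interior (edom J) \<inter> rel_interior (edom G) \<noteq> {}"
    and minex: "\<exists>m. \<forall>y. J m + G m \<le> J y + G y"
    and gamma: "\<gamma> > 0"
    and lam: "\<And>k. lam k \<in> {0<..2}"
    and lamsum: "filterlim (\<lambda>n. \<Sum>k<n. lam k * (2 - lam k)) at_top sequentially"
    and x_def: "\<And>k. x k = prox \<gamma> J (z k)"
    and v_def: "\<And>k. v (Suc k) = prox \<gamma> G (2 *\<^sub>R x k - z k)"
    and z_def: "\<And>k. z (Suc k) = (1 - lam k) *\<^sub>R z k + lam k *\<^sub>R (z k + v (Suc k) - x k)"
  shows "\<exists>zs xs.
     z \<longlonglongrightarrow> zs \<and> x \<longlonglongrightarrow> xs \<and> v \<longlonglongrightarrow> xs \<and>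
     (1/2) *\<^sub>R (rprox \<gamma> G (rprox \<gamma> J zs) + zs) = zs \<and>
     (\<forall>y. J xs + G xs \<le> J y + G y) \<and>
     (\<forall>MJ MG. partly_smooth J xs MJ \<and> partly_smooth G xs MG \<and>
        zs \<in> (\<lambda>u. xs + \<gamma> *\<^sub>R u) ` (rel_interior (subdiff J xs) \<inter> rel_interior (uminus ` subdiff G xs))
      \<longrightarrow>
        (\<forall>\<^sub>F k in sequentially. x k \<in> MJ \<and> v k \<in> MG) \<and>
        (MG = (+) xs ` Tsp G xs \<longrightarrow>
           (\<forall>\<^sub>F k in sequentially. v k \<in> (+) xs ` Tsp G xs \<and> Tsp G (v k) = Tsp G xs)) \<and>
        (MJ = (+) xs ` Tsp J xs \<longrightarrow>
           (\<forall>\<^sub>F k in sequentially. x k \<in> (+) xs ` Tsp J xs \<and> Tsp J (x k) = Tsp J xs)))"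
proof -
  interpret douglas_rachford J G \<gamma> lam z x v
    by unfold_locales (fact assms)+
  obtain m where "\<forall>y. J m + G m \<le> J y + G y" using minex by blast
  then obtain u where "u \<in> subdiff J m" "- u \<in> subdiff G m"
    using minimizer_opposite_subgradients[OF J G ri] by blast
  then obtain zs where zs: "z \<longlonglongrightarrow> zs" "rprox \<gamma> G (rprox \<gamma> J zs) = zs"
    using z_converges rprox_fixed_point_of_opposite_subgradients[OF J G gamma] by blast
  define xs where "xs = prox \<gamma> J zs"
  have "J xs + G xs \<le> J y + G y" for y
    using opposite_subgradients_imp_minimizer[OF J G rprox_fixed_point_subgradients(2,3)[OF J G gamma zs(2)]]
    unfolding xs_def by blast
  moreover have "(1/2) *\<^sub>R (rprox \<gamma> G (rprox \<gamma> J zs) + zs) = zs" using zs(2) by (simp add: scaleR_2[symmetric])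
  ultimately show ?thesis
    using zs x_converges[OF zs(1)] v_converges[OF zs] finite_identification[OF zs xs_def]
    unfolding xs_def by blast
qed

end
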